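(* Let $\omega\in P^+$ be minuscule or quasi-minuscule, $\lambda\in P^+$ and $\nu\in W_0\omega$. Exactly one of the following holds: (i) $(\lambda-\nu)_+\neq\lambda$; then $w_{\lambda-\nu}\in W_{0,\lambda}$, and $\theta(\lambda-\nu)=1$ if $\nu\in R(w_{\lambda-\nu})$ while $\theta(\lambda-\nu)=0$ if $\nu\notin R(w_{\lambda-\nu})$. (ii) $(\lambda-\nu)_+=\lambda$; then $w_{\lambda-\nu}\nu=-\alpha_j$ for some $j\in\{1,\dots,n\}$, and moreover $s_jw_{\lambda-\nu}\in W_{0,\lambda}$, $\theta(\lambda-\nu)=0$, $R(w_{\lambda-\nu})=R(s_jw_{\lambda-\nu})\cup\{\nu\}$, and $q_j=q_0$.
   Context: Let $R$ be an irreducible reduced crystallographic root system of rank $n$ spanning a real Euclidean space $V$ with inner product $\langle\cdot,\cdot\rangle$; $\alpha^\vee:=2\alpha/\langle\alpha,\alpha\rangle$; $P$ the weight lattice; $R^+$ positive roots with simple roots $\alpha_1,\dots,\alpha_n$, $R^-:=-R^+$; $P^+$ the dominant weights; $A:=\{x:0<\langle x,\alpha^\vee\rangle<1\ \forall\alpha\in R^+\}$; $\alpha_0\in R^+$ with $\alpha_0^\vee$ the highest root of $R^\vee$. A weight $\omega\in P^+$ is minuscule if $\omega\ne0$ and $\langle\omega,\alpha^\vee\rangle\in\{0,1\}$ for all $\alpha\in R^+$; quasi-minuscule means $\omega=\alpha_0$. $W_0$ finite Weyl group; $W_{0,\lambda}$ the stabilizer of $\lambda$; $W$ the extended affine Weyl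 group generated by $W_0$ and translations by $P$; $s_0$ reflection in $\{\langle x,\alpha_0^\vee\rangle=1\}$, $s_j$ reflection in $\{\langle x,\alpha_j^\vee\rangle=0\}$; $\ell(w)$ = number of hyperplanes $\{\langle x,\alpha^\vee\rangle=k\}$ separating $A$ and $wA$. $q:W\to\mathbb R\setminus\{0\}$ length multiplicative, $q_j:=q_{s_j}$ ($0\le j\le n$). For $\mu\in P$, $w_\mu$ is the shortest element of $W_0$ with $w_\mu\mu\in P^+$, $\mu_+:=w_\mu\mu$. For $w\in W_0$, $R(w):=R^+\cap w^{-1}(R^-)$. $\rho^\vee:=\tfrac12\sum_{\alpha\in R^+}\alpha^\vee$ and $\theta(\mu):=\langle\mu_+-\mu,\rho^\vee\rangle-\ell(w_\mu)$. *)

theory Defs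
  imports "HOL-Analysis.Analysis"
begin

text \<open>Root-system data: V is a Euclidean space 'a; R is the set of roots;
 alpha j (j in 1..n, n = DIM('a)) are the simple roots.\<close>

definition coroot :: "'a::euclidean_space \<Rightarrow> 'a" where
  "coroot a = (2 / (a \<bullet> a)) *\<^sub>R a"

definition rrefl :: "'a::euclidean_space \<Rightarrow> 'a \<Rightarrow> 'a" where
  "rrefl a x = x - (x \<bullet> coroot a) *\<^sub>R a"

definition irreducible_reduced_crystallographic_root_system :: "'a::euclidean_space set \<Rightarrow> bool" where
  "irreducible_reduced_crystallographic_root_system R \<longleftrightarrow>
     finite R \<and> 0 \<notin> R \<and> span R = UNIV \<and>
     (\<forall>a\<in>R. rrefl a ` R = R) \<and>
     (\<forall>a\<in>R. \<forall>b\<in>R. b \<bullet> coroot a \<in> \<int>) \<and>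
     (\<forall>a\<in>R. \<forall>c::real. c *\<^sub>R a \<in> R \<longrightarrow> c = 1 \<or> c = -1) \<and>
     \<not> (\<exists>R1 R2. R1 \<noteq> {} \<and> R2 \<noteq> {} \<and> R = R1 \<union> R2 \<and> (\<forall>a\<in>R1. \<forall>b\<in>R2. a \<bullet> b = 0))"

definition nonneg_int_comb :: "(nat \<Rightarrow> 'a::euclidean_space) \<Rightarrow> 'a set" where
  "nonneg_int_comb f = {x. \<exists>c::nat \<Rightarrow> int. (\<forall>j. c j \<ge> 0) \<and>
        x = (\<Sum>j\<in>{1..DIM('a)}. of_int (c j) *\<^sub>R f j)}"

definition Rplus :: "'a::euclidean_space set \<Rightarrow> (nat \<Rightarrow> 'a) \<Rightarrow> 'a set" where
  "Rplus R alpha = R \<inter> nonneg_int_comb alpha"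

definition Rminus :: "'a::euclidean_space set \<Rightarrow> (nat \<Rightarrow> 'a) \<Rightarrow> 'a set" where
  "Rminus R alpha = uminus ` Rplus R alpha"

definition is_base :: "'a::euclidean_space set \<Rightarrow> (nat \<Rightarrow> 'a) \<Rightarrow> bool" where
  "is_base R alpha \<longleftrightarrow> alpha ` {1..DIM('a)} \<subseteq> R \<and> inj_on alpha {1..DIM('a)} \<and>
     independent (alpha ` {1..DIM('a)}) \<and> R = Rplus R alpha \<union> Rminus R alpha"

text \<open>alpha_0: the positive root whose coroot is the highest root of the dual root system.\<close>
definition alpha0 :: "'a::euclidean_space set \<Rightarrow> (nat \<Rightarrow> 'a) \<Rightarrow> 'a" where
  "alpha0 R alpha = (THE a. a \<in> Rplus R alpha \<and>
      (\<forall>b\<in>Rplus R alpha. coroot a - coroot b \<in> nonneg_int_comb (\<lambda>j. coroot (alpha j))))"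

definition weights :: "'a::euclidean_space set \<Rightarrow> 'a set" where
  "weights R = {x. \<forall>a\<in>R. x \<bullet> coroot a \<in> \<int>}"

definition dominant :: "'a::euclidean_space set \<Rightarrow> (nat \<Rightarrow> 'a) \<Rightarrow> 'a set" where
  "dominant R alpha = {x \<in> weights R. \<forall>a\<in>Rplus R alpha. x \<bullet> coroot a \<ge> 0}"

definition minuscule :: "'a::euclidean_space set \<Rightarrow> (nat \<Rightarrow> 'a) \<Rightarrow> 'a \<Rightarrow> bool" where
  "minuscule R alpha w \<longleftrightarrow> w \<in> dominant R alpha \<and> w \<noteq> 0 \<and>
     (\<forall>a\<in>Rplus R alpha. w \<bullet> coroot a \<in> {0, 1})"

definition quasi_minuscule :: "'a::euclidean_space set \<Rightarrow> (nat \<Rightarrow> 'a) \<Rightarrow> 'a \<Rightarrow> bool" where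
  "quasi_minuscule R alpha w \<longleftrightarrow> w = alpha0 R alpha"

inductive_set W0 :: "'a::euclidean_space set \<Rightarrow> ('a \<Rightarrow> 'a) set" for R where
  W0_id: "id \<in> W0 R"
| W0_step: "w \<in> W0 R \<Longrightarrow> a \<in> R \<Longrightarrow> rrefl a \<circ> w \<in> W0 R"

definition Waff :: "'a::euclidean_space set \<Rightarrow> ('a \<Rightarrow> 'a) set" where
  "Waff R = {f. \<exists>w\<in>W0 R. \<exists>m\<in>weights R. f = (\<lambda>x. w x + m)}"

definition stab :: "'a::euclidean_space set \<Rightarrow> 'a \<Rightarrow> ('a \<Rightarrow> 'a) set" where
  "stab R l = {w \<in> W0 R. w l = l}"

definition alcove :: "'a::euclidean_space set \<Rightarrow> (nat \<Rightarrow> 'a) \<Rightarrow> 'a set" where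
  "alcove R alpha = {x. \<forall>a\<in>Rplus R alpha. 0 < x \<bullet> coroot a \<and> x \<bullet> coroot a < 1}"

text \<open>Length: number of hyperplanes {x. x . a^vee = k} (a positive, k integer)
  separating A and wA.\<close>
definition len :: "'a::euclidean_space set \<Rightarrow> (nat \<Rightarrow> 'a) \<Rightarrow> ('a \<Rightarrow> 'a) \<Rightarrow> nat" where
  "len R alpha w = card {(a, k). a \<in> Rplus R alpha \<and>
      (\<exists>x\<in>alcove R alpha. \<exists>y\<in>alcove R alpha.
         (x \<bullet> coroot a - of_int k) * (w y \<bullet> coroot a - of_int k) < 0)}"

definition length_multiplicative ::
  "'a::euclidean_space set \<Rightarrow> (nat \<Rightarrow> 'a) \<Rightarrow> (('a \<Rightarrow> 'a) \<Rightarrow> real) \<Rightarrow> bool" where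
  "length_multiplicative R alpha q \<longleftrightarrow>
     (\<forall>w\<in>Waff R. q w \<noteq> 0) \<and>
     (\<forall>v\<in>Waff R. \<forall>w\<in>Waff R. len R alpha (v \<circ> w) = len R alpha v + len R alpha w
         \<longrightarrow> q (v \<circ> w) = q v * q w)"

text \<open>s_0: reflection in the hyperplane {x. x . alpha_0^vee = 1}; s_j = s_{alpha_j}.\<close>
definition s0 :: "'a::euclidean_space set \<Rightarrow> (nat \<Rightarrow> 'a) \<Rightarrow> 'a \<Rightarrow> 'a" where
  "s0 R alpha x = x - (x \<bullet> coroot (alpha0 R alpha) - 1) *\<^sub>R alpha0 R alpha"

definition wmin :: "'a::euclidean_space set \<Rightarrow> (nat \<Rightarrow> 'a) \<Rightarrow> 'a \<Rightarrow> ('a \<Rightarrow> 'a)" where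
  "wmin R alpha m = (THE w. w \<in> W0 R \<and> w m \<in> dominant R alpha \<and>
      (\<forall>v\<in>W0 R. v m \<in> dominant R alpha \<longrightarrow> len R alpha w \<le> len R alpha v))"

definition dom_rep :: "'a::euclidean_space set \<Rightarrow> (nat \<Rightarrow> 'a) \<Rightarrow> 'a \<Rightarrow> 'a" where
  "dom_rep R alpha m = wmin R alpha m m"

definition inv_set :: "'a::euclidean_space set \<Rightarrow> (nat \<Rightarrow> 'a) \<Rightarrow> ('a \<Rightarrow> 'a) \<Rightarrow> 'a set" where
  "inv_set R alpha w = {a \<in> Rplus R alpha. w a \<in> Rminus R alpha}"

definition rho_vee :: "'a::euclidean_space set \<Rightarrow> (nat \<Rightarrow> 'a) \<Rightarrow> 'a" where
  "rho_vee R alpha = (1/2) *\<^sub>R (\<Sum>a\<in>Rplus R alpha. coroot a)"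

definition theta :: "'a::euclidean_space set \<Rightarrow> (nat \<Rightarrow> 'a) \<Rightarrow> 'a \<Rightarrow> real" where
  "theta R alpha m = (dom_rep R alpha m - m) \<bullet> rho_vee R alpha - real (len R alpha (wmin R alpha m))"

end

theory Submission imports Defs begin

text \<open>
  Put \<open>mu = lam - nu\<close>. The shortest \<open>w\<close> with \<open>w mu\<close> dominant has as inversion set exactly
  \<open>N(mu) = {b > 0. mu \<bullet> b\<^sup>\<or> < 0}\<close>, so \<open>len w = card N(mu)\<close>, and a computation with
  \<open>rho\<^sup>\<or>\<close> gives \<open>theta mu = (\<Sum>b\<in>N(mu). - mu \<bullet> b\<^sup>\<or> - 1)\<close>. Because \<open>nu\<close> lies in a minuscule
  or quasi-minuscule orbit, it pairs with every root other than \<open>nu\<close> and \<open>-nu\<close> to \<open>-1\<close>, \<open>0\<close> or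
  \<open>1\<close>; hence every \<open>b \<in> N(mu)\<close> other than \<open>nu\<close> has \<open>lam \<bullet> b\<^sup>\<or> = 0\<close> and \<open>nu \<bullet> b\<^sup>\<or> = 1\<close>. Such
  roots contribute nothing to \<open>theta\<close>, and \<open>w\<close> fixes \<open>lam\<close> unless \<open>nu\<close> itself is in the way.

  If \<open>mu\<^sub>+ = lam\<close>, then \<open>|mu| = |lam|\<close> forces \<open>lam \<bullet> nu\<^sup>\<or> = 1\<close>, so \<open>nu\<close> is a root and
  \<open>om = alpha0\<close>. Lowering the height of \<open>u nu\<close> by simple reflections orthogonal to \<open>lam\<close>
  produces \<open>u\<close> fixing \<open>lam\<close> with \<open>u nu = alpha j\<close>, and then \<open>w = s_j u\<close>. Finally the affine
  map \<open>x \<mapsto> v x + m\<close> with \<open>v = s_alpha0 z\<^sup>-\<^sup>1\<close>, where \<open>z alpha0 = alpha j\<close>, conjugates \<open>s_j\<close> into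
  \<open>s0\<close>, and composing it with \<open>s_j\<close> crosses exactly one more hyperplane; multiplicativity of
  \<open>q\<close> then gives \<open>q s_j = q s0\<close>.
\<close>

lemma inner_coroot_self: "a \<noteq> 0 \<Longrightarrow> a \<bullet> coroot a = 2"
  by (simp add: coroot_def)

lemma coroot_uminus: "coroot (- a) = - coroot a"
  by (simp add: coroot_def)

lemma coroot_nonzero: "a \<noteq> 0 \<Longrightarrow> coroot a \<noteq> 0"
  by (simp add: coroot_def)

lemma coroot_coroot: "a \<noteq> 0 \<Longrightarrow> coroot (coroot a) = a"
  by (simp add: coroot_def field_simps power2_eq_square)

lemma coroot_inject: "a \<noteq> 0 \<Longrightarrow> b \<noteq> 0 \<Longrightarrow> coroot a = coroot b \<Longrightarrow> a = b"
  by (metis coroot_coroot)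

lemma inner_coroot_scaleR_swap: "(x \<bullet> coroot a) *\<^sub>R a = (x \<bullet> a) *\<^sub>R coroot a"
  by (simp add: coroot_def)

lemma rrefl_self: "a \<noteq> 0 \<Longrightarrow> rrefl a a = - a"
  by (simp add: rrefl_def inner_coroot_self scaleR_2)

lemma rrefl_rrefl: "a \<noteq> 0 \<Longrightarrow> rrefl a (rrefl a x) = x"
  by (simp add: rrefl_def inner_diff_left inner_coroot_self algebra_simps)

lemma rrefl_uminus: "rrefl (- a) = rrefl a"
  by (rule ext) (simp add: rrefl_def coroot_uminus)

lemma linear_rrefl: "linear (rrefl a)"
  unfolding rrefl_def by (intro linearI) (auto simp: algebra_simps inner_add_left)

lemma orthogonal_transformation_rrefl: "a \<noteq> 0 \<Longrightarrow> orthogonal_transformation (rrefl a)"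
  by (simp add: orthogonal_transformation_def linear_rrefl rrefl_def coroot_def
      inner_diff_left inner_diff_right field_simps inner_commute)

lemma orthogonal_transformation_inner: "orthogonal_transformation f \<Longrightarrow> f x \<bullet> f y = x \<bullet> y"
  by (simp add: orthogonal_transformation_def)

lemma orthogonal_transformation_coroot: "orthogonal_transformation f \<Longrightarrow> coroot (f a) = f (coroot a)"
  by (simp add: coroot_def orthogonal_transformation_inner orthogonal_transformation_scaleR)

lemma orthogonal_transformation_rrefl_conj:
  "orthogonal_transformation f \<Longrightarrow> rrefl (f a) (f x) = f (rrefl a x)"
  by (simp add: rrefl_def orthogonal_transformation_coroot orthogonal_transformation_inner
      orthogonal_transformation_scaleR linear_diff orthogonal_transformation_linear)

lemma rrefl_rrefl_conj: "r \<noteq> 0 \<Longrightarrow> rrefl (rrefl r b) y = rrefl r (rrefl b (rrefl r y))"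
  using orthogonal_transformation_rrefl_conj[OF orthogonal_transformation_rrefl, of r b "rrefl r y"]
  by (simp add: rrefl_rrefl)

lemma inner_rrefl_coroot: "r \<noteq> 0 \<Longrightarrow> rrefl r x \<bullet> coroot a = x \<bullet> coroot (rrefl r a)"
  using orthogonal_transformation_inner[OF orthogonal_transformation_rrefl, of r x "rrefl r (coroot a)"]
  by (simp add: rrefl_rrefl orthogonal_transformation_coroot[OF orthogonal_transformation_rrefl])

lemma inner_rrefl_self: "r \<noteq> 0 \<Longrightarrow> r \<bullet> rrefl r y = - (r \<bullet> y)"
  using orthogonal_transformation_inner[OF orthogonal_transformation_rrefl, of r r "rrefl r y"]
  by (simp add: rrefl_rrefl rrefl_self)

lemma coroot_rrefl: "r \<noteq> 0 \<Longrightarrow> coroot (rrefl r c) = coroot c - (r \<bullet> coroot c) *\<^sub>R coroot r"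
proof -
  assume r: "r \<noteq> 0"
  have "coroot (rrefl r c) = coroot c - (coroot c \<bullet> coroot r) *\<^sub>R r"
    using orthogonal_transformation_coroot[OF orthogonal_transformation_rrefl[OF r]]
      by (simp add: rrefl_def)
  also have "(coroot c \<bullet> coroot r) *\<^sub>R r = (coroot c \<bullet> r) *\<^sub>R coroot r"
    by (rule inner_coroot_scaleR_swap)
  finally show ?thesis by (simp add: inner_commute)
qed

lemma Ints_pos_ge1: "(x::real) \<in> \<int> \<Longrightarrow> 0 < x \<Longrightarrow> 1 \<le> x"
  by (metis Ints_cases of_int_0_less_iff of_int_1_le_iff zless_imp_add1_zle add.left_neutral)

lemma finite_ex_max: "finite S \<Longrightarrow> S \<noteq> {} \<Longrightarrow> \<exists>c\<in>S. \<forall>b\<in>S. f b \<le> (f c :: 'b::linorder)"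
proof -
  assume S: "finite S" "S \<noteq> {}"
  have "Max (f ` S) \<in> f ` S" using S by (intro Max_in) auto
  then obtain c where c: "c \<in> S" "f c = Max (f ` S)" by auto
  then show ?thesis using S by (metis Max_ge finite_imageI imageI)
qed

lemma separates_iff:
  fixes g h :: real and k d :: int
  assumes g: "0 < g" "g < 1" and h: "of_int d < h" "h < of_int d + 1"
  shows "(g - of_int k) * (h - of_int k) < 0 \<longleftrightarrow> (1 \<le> k \<and> k \<le> d) \<or> (d + 1 \<le> k \<and> k \<le> 0)"
proof
  assume "(g - of_int k) * (h - of_int k) < 0"
  then have "(g < of_int k \<and> of_int k < h) \<or> (of_int k < g \<and> h < of_int k)"
    by (auto simp: mult_less_0_iff)
  then show "(1 \<le> k \<and> k \<le> d) \<or> (d + 1 \<le> k \<and> k \<le> 0)"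
  proof
    assume a: "g < of_int k \<and> of_int k < h"
    then have "0 < k" using g by linarith
    moreover have "k < d + 1" using a h by linarith
    ultimately show ?thesis by simp
  next
    assume a: "of_int k < g \<and> h < of_int k"
    then have "k < 1" using g by linarith
    moreover have "d < k" using a h by linarith
    ultimately show ?thesis by simp
  qed
next
  assume "(1 \<le> k \<and> k \<le> d) \<or> (d + 1 \<le> k \<and> k \<le> 0)"
  then show "(g - of_int k) * (h - of_int k) < 0"
  proof
    assume a: "1 \<le> k \<and> k \<le> d"
    then have "g - of_int k < 0" "0 < h - of_int k" using g h by linarith+
    then show ?thesis by (simp add: mult_less_0_iff)
  next
    assume a: "d + 1 \<le> k \<and> k \<le> 0"
    then have "0 < g - of_int k" "h - of_int k < 0" using g h by linarith+
    then show ?thesis by (simp add: mult_less_0_iff)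
  qed
qed

lemma separating_levels:
  fixes g h :: "'b \<Rightarrow> real" and d :: int
  assumes A: "A \<noteq> {}" and g: "\<forall>x\<in>A. 0 < g x \<and> g x < 1" and h: "\<forall>y\<in>A. of_int d < h y \<and> h y < of_int d + 1"
  shows "{k::int. \<exists>x\<in>A. \<exists>y\<in>A. (g x - of_int k) * (h y - of_int k) < 0} = {k. 1 \<le> k \<and> k \<le> d} \<union> {k. d + 1 \<le> k \<and> k \<le> 0}"
proof -
  obtain x0 where x0: "x0 \<in> A" using A by blast
  show ?thesis
  proof (intro set_eqI iffI)
    fix k assume "k \<in> {k::int. \<exists>x\<in>A. \<exists>y\<in>A. (g x - of_int k) * (h y - of_int k) < 0}"
    then obtain x y where "x \<in> A" "y \<in> A" "(g x - of_int k) * (h y - of_int k) < 0" by blast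
    then show "k \<in> {k. 1 \<le> k \<and> k \<le> d} \<union> {k. d + 1 \<le> k \<and> k \<le> 0}"
      using separates_iff[of "g x" d "h y" k] g h by auto
  next
    fix k assume "k \<in> {k. 1 \<le> k \<and> k \<le> d} \<union> {k. d + 1 \<le> k \<and> k \<le> 0}"
    then have "(g x0 - of_int k) * (h x0 - of_int k) < 0"
      using separates_iff[of "g x0" d "h x0" k] g h x0 by auto
    then show "k \<in> {k::int. \<exists>x\<in>A. \<exists>y\<in>A. (g x - of_int k) * (h y - of_int k) < 0}" using x0 by blast
  qed
qed

lemma card_levels: "card ({k::int. 1 \<le> k \<and> k \<le> d} \<union> {k. d + 1 \<le> k \<and> k \<le> 0}) = nat \<bar>d\<bar>"
proof (cases "0 \<le> d")
  case True
  then have "{k::int. 1 \<le> k \<and> k \<le> d} \<union> {k. d + 1 \<le> k \<and> k \<le> 0} = {1..d}" by auto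
  then show ?thesis using True by simp
next
  case False
  then have "{k::int. 1 \<le> k \<and> k \<le> d} \<union> {k. d + 1 \<le> k \<and> k \<le> 0} = {d+1..0}" by auto
  then show ?thesis using False by simp
qed

lemma finite_levels: "finite ({k::int. 1 \<le> k \<and> k \<le> d} \<union> {k. d + 1 \<le> k \<and> k \<le> 0})"
proof -
  have "{k::int. 1 \<le> k \<and> k \<le> d} \<union> {k. d + 1 \<le> k \<and> k \<le> 0} \<subseteq> {d+1..d} \<union> {d+1..0} \<union> {1..d}" by auto
  then show ?thesis by (rule finite_subset) simp
qed

lemma sum_delta_scaleR:
  fixes f :: "_ \<Rightarrow> 'b::real_vector"
  shows "finite A \<Longrightarrow> k \<in> A \<Longrightarrow> (\<Sum>j\<in>A. (if j = k then t else 0) *\<^sub>R f j) = t *\<^sub>R f k"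
  by (subst sum.cong[OF refl, of _ _ "\<lambda>j. if j = k then t *\<^sub>R f k else 0"]) auto


locale root_system_with_base =
  fixes R :: "'a::euclidean_space set" and alpha :: "nat \<Rightarrow> 'a"
  assumes irr: "irreducible_reduced_crystallographic_root_system R"
    and base: "is_base R alpha"
begin

abbreviation "Rp \<equiv> Rplus R alpha"
abbreviation "Rm \<equiv> Rminus R alpha"

lemma finite_R: "finite R"
  using irr by (simp add: irreducible_reduced_crystallographic_root_system_def)
lemma zero_notin_R: "0 \<notin> R"
  using irr by (simp add: irreducible_reduced_crystallographic_root_system_def)
lemma root_nonzero: "a \<in> R \<Longrightarrow> a \<noteq> 0" using zero_notin_R by auto
lemma rrefl_root: "a \<in> R \<Longrightarrow> b \<in> R \<Longrightarrow> rrefl a b \<in> R"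
  using irr by (auto simp: irreducible_reduced_crystallographic_root_system_def)
lemma root_pairing_int: "a \<in> R \<Longrightarrow> b \<in> R \<Longrightarrow> b \<bullet> coroot a \<in> \<int>"
  using irr by (auto simp: irreducible_reduced_crystallographic_root_system_def)
lemma root_multiple: "a \<in> R \<Longrightarrow> c *\<^sub>R a \<in> R \<Longrightarrow> c = 1 \<or> c = -1"
  using irr by (auto simp: irreducible_reduced_crystallographic_root_system_def)
lemma root_system_irreducible: "R1 \<noteq> {} \<Longrightarrow> R2 \<noteq> {} \<Longrightarrow> R = R1 \<union> R2 \<Longrightarrow> (\<forall>a\<in>R1. \<forall>b\<in>R2. a \<bullet> b = 0) \<Longrightarrow> False"
  using irr unfolding irreducible_reduced_crystallographic_root_system_def by blast
lemma uminus_root: "a \<in> R \<Longrightarrow> -a \<in> R"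
  using rrefl_root[of a a] rrefl_self[of a] root_nonzero by auto

lemma simple_root: "j \<in> {Suc 0..DIM('a)} \<Longrightarrow> alpha j \<in> R" using base by (auto simp: is_base_def)
lemma simple_inj: "inj_on alpha {Suc 0..DIM('a)}" using base by (auto simp: is_base_def)
lemma simple_independent: "independent (alpha ` {Suc 0..DIM('a)})" using base
  by (auto simp: is_base_def)
lemma simple_nonzero: "k \<in> {Suc 0..DIM('a)} \<Longrightarrow> alpha k \<noteq> 0" using simple_root root_nonzero by blast

lemma R_Rp_Rm: "R = Rp \<union> Rm" using base by (auto simp: is_base_def)
lemma Rp_root: "a \<in> Rp \<Longrightarrow> a \<in> R" by (simp add: Rplus_def)
lemma Rm_iff_uminus_Rp: "a \<in> Rm \<longleftrightarrow> -a \<in> Rp"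
  unfolding Rminus_def by (auto intro: image_eqI[where x="-a"])
lemma finite_Rp: "finite Rp" using finite_R by (simp add: Rplus_def)

lemma dominant_iff: "x \<in> dominant R alpha \<longleftrightarrow> x \<in> weights R \<and> (\<forall>a\<in>Rp. 0 \<le> x \<bullet> coroot a)"
  by (simp add: dominant_def)

lemma weights_pairing_int: "x \<in> weights R \<Longrightarrow> a \<in> R \<Longrightarrow> x \<bullet> coroot a \<in> \<int>"
  by (simp add: weights_def)

lemma zero_weights: "0 \<in> weights R"
  by (simp add: weights_def)

lemma root_weights: "a \<in> R \<Longrightarrow> a \<in> weights R"
  using root_pairing_int by (simp add: weights_def)

lemma diff_weights: "x \<in> weights R \<Longrightarrow> y \<in> weights R \<Longrightarrow> x - y \<in> weights R"
  by (simp add: weights_def inner_diff_left Ints_diff)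

lemma simple_coeff_zero:
  assumes s: "(\<Sum>j\<in>{Suc 0..DIM('a)}. r j *\<^sub>R alpha j) = 0" and j: "j \<in> {Suc 0..DIM('a)}"
  shows "r j = 0"
proof -
  define u where "u v = r (inv_into {Suc 0..DIM('a)} alpha v)" for v
  have "(\<Sum>v\<in>alpha`{Suc 0..DIM('a)}. u v *\<^sub>R v) = (\<Sum>j\<in>{Suc 0..DIM('a)}. u (alpha j) *\<^sub>R alpha j)"
    using sum.reindex[OF simple_inj, of "\<lambda>v. u v *\<^sub>R v"] by (simp add: comp_def)
  also have "\<dots> = (\<Sum>j\<in>{Suc 0..DIM('a)}. r j *\<^sub>R alpha j)"
    by (rule sum.cong) (auto simp: u_def inv_into_f_f simple_inj)
  finally have "(\<Sum>v\<in>alpha`{Suc 0..DIM('a)}. u v *\<^sub>R v) = 0" using s by simp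
  with simple_independent have "\<forall>v\<in>alpha`{Suc 0..DIM('a)}. u v = 0"
    using dependent_finite[of "alpha ` {Suc 0..DIM('a)}"] by auto
  then have "u (alpha j) = 0" using j by auto
  then show ?thesis by (metis inv_into_f_f[OF simple_inj j] u_def)
qed

lemma simple_coeff_eq:
  assumes "(\<Sum>j\<in>{Suc 0..DIM('a)}. r j *\<^sub>R alpha j) = (\<Sum>j\<in>{Suc 0..DIM('a)}. s j *\<^sub>R alpha j)" "j \<in> {Suc 0..DIM('a)}"
  shows "r j = s j"
proof -
  have "(\<Sum>j\<in>{Suc 0..DIM('a)}. (r j - s j) *\<^sub>R alpha j) = 0"
    using assms(1) by (simp add: scaleR_diff_left sum_subtractf)
  from simple_coeff_zero[OF this assms(2)] show ?thesis by simp
qed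

lemma sum_delta_alpha: "k \<in> {Suc 0..DIM('a)} \<Longrightarrow>
    (\<Sum>j\<in>{Suc 0..DIM('a)}. (if j = k then t else 0) *\<^sub>R alpha j) = t *\<^sub>R alpha k"
  using sum_delta_scaleR[of "{Suc 0..DIM('a)}" k t alpha] by simp

definition pos_cone :: "'a set" where
  "pos_cone = {x. \<exists>r. (\<forall>j. 0 \<le> r j) \<and> x = (\<Sum>j\<in>{Suc 0..DIM('a)}. r j *\<^sub>R alpha j)}"

lemma pos_cone_zero: "0 \<in> pos_cone"
  unfolding pos_cone_def by (rule CollectI, rule exI[of _ "\<lambda>_. 0"]) simp

lemma pos_cone_add: "x \<in> pos_cone \<Longrightarrow> y \<in> pos_cone \<Longrightarrow> x + y \<in> pos_cone"
  unfolding pos_cone_def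
proof (clarsimp)
  fix r s :: "nat \<Rightarrow> real" assume "\<forall>j. 0 \<le> r j" "\<forall>j. 0 \<le> s j"
  then show "\<exists>t. (\<forall>j. 0 \<le> t j) \<and> (\<Sum>j\<in>{Suc 0..DIM('a)}. r j *\<^sub>R alpha j) + (\<Sum>j\<in>{Suc 0..DIM('a)}. s j *\<^sub>R alpha j) = (\<Sum>j\<in>{Suc 0..DIM('a)}. t j *\<^sub>R alpha j)"
    by (intro exI[of _ "\<lambda>j. r j + s j"]) (auto simp: scaleR_add_left sum.distrib)
qed

lemma pos_cone_scaleR: "x \<in> pos_cone \<Longrightarrow> 0 \<le> t \<Longrightarrow> t *\<^sub>R x \<in> pos_cone"
  unfolding pos_cone_def
proof (clarsimp)
  fix r :: "nat \<Rightarrow> real" assume "\<forall>j. 0 \<le> r j" "0 \<le> t"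
  then show "\<exists>s. (\<forall>j. 0 \<le> s j) \<and> t *\<^sub>R (\<Sum>j\<in>{Suc 0..DIM('a)}. r j *\<^sub>R alpha j) = (\<Sum>j\<in>{Suc 0..DIM('a)}. s j *\<^sub>R alpha j)"
    by (intro exI[of _ "\<lambda>j. t * r j"]) (auto simp: scaleR_sum_right)
qed

lemma pos_cone_simple: "k \<in> {Suc 0..DIM('a)} \<Longrightarrow> alpha k \<in> pos_cone"
  unfolding pos_cone_def
  by (rule CollectI, rule exI[of _ "\<lambda>j. if j = k then 1 else 0"]) (simp add: sum_delta_alpha)

lemma pos_cone_sum: "finite S \<Longrightarrow> (\<forall>i\<in>S. v i \<in> pos_cone) \<Longrightarrow> (\<forall>i\<in>S. 0 \<le> r i) \<Longrightarrow>
    (\<Sum>i\<in>S. r i *\<^sub>R v i) \<in> pos_cone"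
  by (induction S rule: finite_induct) (auto intro: pos_cone_add pos_cone_scaleR pos_cone_zero)

lemma pos_cone_pointed: assumes "x \<in> pos_cone" "-x \<in> pos_cone" shows "x = 0"
proof -
  obtain r where r: "\<forall>j. 0 \<le> r j" "x = (\<Sum>j\<in>{Suc 0..DIM('a)}. r j *\<^sub>R alpha j)"
    using assms(1) pos_cone_def by auto
  obtain s where s: "\<forall>j. 0 \<le> s j" "-x = (\<Sum>j\<in>{Suc 0..DIM('a)}. s j *\<^sub>R alpha j)"
    using assms(2) pos_cone_def by auto
  have "(\<Sum>j\<in>{Suc 0..DIM('a)}. (r j + s j) *\<^sub>R alpha j) = (\<Sum>j\<in>{Suc 0..DIM('a)}. r j *\<^sub>R alpha j) + (\<Sum>j\<in>{Suc 0..DIM('a)}. s j *\<^sub>R alpha j)"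
    by (simp add: scaleR_add_left sum.distrib)
  also have "\<dots> = x + - x" using r(2) s(2) by simp
  finally have "(\<Sum>j\<in>{Suc 0..DIM('a)}. (r j + s j) *\<^sub>R alpha j) = 0" by simp
  then have "\<forall>j\<in>{Suc 0..DIM('a)}. r j + s j = 0" using simple_coeff_zero[of "\<lambda>j. r j + s j"] by auto
  then have "\<forall>j\<in>{Suc 0..DIM('a)}. r j = 0" using r s by (metis add_nonneg_eq_0_iff)
  then show ?thesis using r by simp
qed

lemma Rp_nonneg_int_comb: "a \<in> Rp \<Longrightarrow>
    \<exists>c::nat \<Rightarrow> int. (\<forall>j. 0 \<le> c j) \<and> a = (\<Sum>j\<in>{Suc 0..DIM('a)}. of_int (c j) *\<^sub>R alpha j)"
  by (auto simp: Rplus_def nonneg_int_comb_def)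

lemma Rp_pos_cone: "a \<in> Rp \<Longrightarrow> a \<in> pos_cone"
proof -
  assume "a \<in> Rp"
  then obtain c :: "nat \<Rightarrow> int" where "\<forall>j. 0 \<le> c j" "a = (\<Sum>j\<in>{Suc 0..DIM('a)}. of_int (c j) *\<^sub>R alpha j)"
    using Rp_nonneg_int_comb by blast
  then show "a \<in> pos_cone" unfolding pos_cone_def
    by (intro CollectI exI[of _ "\<lambda>j. of_int (c j)"]) auto
qed

lemma Rp_not_Rm: "a \<in> Rp \<Longrightarrow> a \<notin> Rm"
proof
  assume a: "a \<in> Rp" "a \<in> Rm"
  then have "-a \<in> Rp" by (simp add: Rm_iff_uminus_Rp)
  then have "a = 0" using a pos_cone_pointed Rp_pos_cone by blast
  then show False using a Rp_root zero_notin_R by auto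
qed

lemma root_pos_cone_Rp: "a \<in> R \<Longrightarrow> a \<in> pos_cone \<Longrightarrow> a \<in> Rp"
  using R_Rp_Rm Rm_iff_uminus_Rp pos_cone_pointed Rp_pos_cone zero_notin_R by fastforce

lemma simple_Rp: "k \<in> {Suc 0..DIM('a)} \<Longrightarrow> alpha k \<in> Rp"
  using root_pos_cone_Rp simple_root pos_cone_simple by blast

lemma uminus_Rp_Rm: "a \<in> Rp \<Longrightarrow> -a \<in> Rm" by (simp add: Rm_iff_uminus_Rp)
lemma pos_cone_scaleR_iff: "0 < t \<Longrightarrow> t *\<^sub>R x \<in> pos_cone \<longleftrightarrow> x \<in> pos_cone"
  using pos_cone_scaleR[of "t *\<^sub>R x" "1/t"] pos_cone_scaleR[of x t] by auto

lemma coroot_pos_cone_iff: "coroot a \<in> pos_cone \<longleftrightarrow> a \<in> pos_cone"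
  by (cases "a = 0") (auto simp: coroot_def pos_cone_scaleR_iff)


subsection \<open>The finite Weyl group\<close>

lemma orthogonal_transformation_W0: "w \<in> W0 R \<Longrightarrow> orthogonal_transformation w"
proof (induction rule: W0.induct)
  case W0_id
  show ?case by (simp add: id_def)
next
  case (W0_step w a)
  then show ?case
    using orthogonal_transformation_compose[OF orthogonal_transformation_rrefl[OF root_nonzero]]
      by blast
qed

lemma W0_root: "w \<in> W0 R \<Longrightarrow> a \<in> R \<Longrightarrow> w a \<in> R"
  by (induction rule: W0.induct) (auto intro: rrefl_root)

lemma W0_comp: "v \<in> W0 R \<Longrightarrow> w \<in> W0 R \<Longrightarrow> v \<circ> w \<in> W0 R"
  by (induction rule: W0.induct) (auto simp: comp_assoc intro: W0.intros)

lemma rrefl_W0: "a \<in> R \<Longrightarrow> rrefl a \<in> W0 R"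
  using W0_step[OF W0_id, of a R] by simp

lemma W0_has_inverse: "w \<in> W0 R \<Longrightarrow> \<exists>v\<in>W0 R. v \<circ> w = id \<and> w \<circ> v = id"
proof (induction rule: W0.induct)
  case W0_id
  show ?case by (rule bexI[of _ id]) (simp_all add: W0.W0_id)
next
  case (W0_step w a)
  then obtain v where v: "v \<in> W0 R" "v \<circ> w = id" "w \<circ> v = id" by blast
  have r: "rrefl a \<circ> rrefl a = id"
    using W0_step root_nonzero by (auto simp: fun_eq_iff rrefl_rrefl)
  have "(v \<circ> rrefl a) \<circ> (rrefl a \<circ> w) = v \<circ> (rrefl a \<circ> rrefl a) \<circ> w"
    "(rrefl a \<circ> w) \<circ> (v \<circ> rrefl a) = rrefl a \<circ> (w \<circ> v) \<circ> rrefl a"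
    by (simp_all add: comp_assoc)
  then have "(v \<circ> rrefl a) \<circ> (rrefl a \<circ> w) = id" "(rrefl a \<circ> w) \<circ> (v \<circ> rrefl a) = id"
    using r v by simp_all
  then show ?case using W0_comp[OF v(1) rrefl_W0[OF W0_step(2)]] by blast
qed

lemma W0_inv: "w \<in> W0 R \<Longrightarrow> inv w \<in> W0 R"
proof -
  assume "w \<in> W0 R"
  then obtain v where "v \<in> W0 R" "v \<circ> w = id" "w \<circ> v = id" using W0_has_inverse by blast
  then show ?thesis using inv_unique_comp by metis
qed

lemma W0_inv_apply [simp]: "w \<in> W0 R \<Longrightarrow> inv w (w x) = x"
  by (simp add: orthogonal_transformation_W0 orthogonal_transformation_inj)

lemma W0_apply_inv [simp]: "w \<in> W0 R \<Longrightarrow> w (inv w x) = x"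
  by (simp add: orthogonal_transformation_W0 orthogonal_transformation_surj surj_f_inv_f)

lemma W0_inner: "w \<in> W0 R \<Longrightarrow> w x \<bullet> w y = x \<bullet> y"
  using orthogonal_transformation_W0 orthogonal_transformation_inner by blast

lemma W0_inner_inv: "w \<in> W0 R \<Longrightarrow> w x \<bullet> y = x \<bullet> inv w y"
  using W0_inner[of w x "inv w y"] by simp

lemma W0_coroot: "w \<in> W0 R \<Longrightarrow> coroot (w a) = w (coroot a)"
  using orthogonal_transformation_W0 orthogonal_transformation_coroot by blast

lemma W0_inner_coroot: "w \<in> W0 R \<Longrightarrow> w x \<bullet> coroot (w a) = x \<bullet> coroot a"
  by (simp add: W0_coroot W0_inner)

lemma W0_inner_coroot_inv: "w \<in> W0 R \<Longrightarrow> w x \<bullet> coroot b = x \<bullet> coroot (inv w b)"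
  using W0_inner_coroot[of w x "inv w b"] by simp

lemma W0_inj: "w \<in> W0 R \<Longrightarrow> w x = w y \<Longrightarrow> x = y"
  by (simp add: orthogonal_transformation_W0 orthogonal_transformation_inj inj_eq)

lemma W0_uminus: "w \<in> W0 R \<Longrightarrow> w (- x) = - w x"
  by (simp add: linear_neg orthogonal_transformation_linear orthogonal_transformation_W0)

lemma W0_diff: "w \<in> W0 R \<Longrightarrow> w (x - y) = w x - w y"
  by (simp add: linear_diff orthogonal_transformation_linear orthogonal_transformation_W0)

lemma W0_zero: "w \<in> W0 R \<Longrightarrow> w 0 = 0"
  by (simp add: linear_0 orthogonal_transformation_linear orthogonal_transformation_W0)

lemma W0_weights: "w \<in> W0 R \<Longrightarrow> x \<in> weights R \<Longrightarrow> w x \<in> weights R"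
  unfolding weights_def
proof (intro CollectI ballI)
  fix a assume w: "w \<in> W0 R" and x: "x \<in> {x. \<forall>a\<in>R. x \<bullet> coroot a \<in> \<int>}" and a: "a \<in> R"
  have "inv w a \<in> R" using W0_root[OF W0_inv[OF w] a] .
  then show "w x \<bullet> coroot a \<in> \<int>" using x W0_inner_coroot_inv[OF w, of x a] by simp
qed

lemma W0_Rp_if_simple_Rp:
  assumes w: "w \<in> W0 R" and s: "\<forall>k\<in>{Suc 0..DIM('a)}. w (alpha k) \<in> Rp" and a: "a \<in> Rp"
  shows "w a \<in> Rp"
proof -
  obtain c :: "nat \<Rightarrow> int" where c: "\<forall>j. 0 \<le> c j" "a = (\<Sum>j\<in>{Suc 0..DIM('a)}. of_int (c j) *\<^sub>R alpha j)"
    using Rp_nonneg_int_comb[OF a] by blast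
  have lw: "linear w" using orthogonal_transformation_W0[OF w] orthogonal_transformation_linear
    by blast
  have "w a = (\<Sum>j\<in>{Suc 0..DIM('a)}. of_int (c j) *\<^sub>R w (alpha j))"
    using c(2) by (simp add: linear_sum[OF lw] linear_scale[OF lw])
  also have "\<dots> \<in> pos_cone" using s c(1) by (intro pos_cone_sum) (auto intro: Rp_pos_cone)
  finally show ?thesis using W0_root[OF w Rp_root[OF a]] root_pos_cone_Rp by blast
qed

lemma rrefl_simple_Rp:
  assumes k: "k \<in> {Suc 0..DIM('a)}" and a: "a \<in> Rp" and ne: "a \<noteq> alpha k"
  shows "rrefl (alpha k) a \<in> Rp"
proof (rule ccontr)
  let ?b = "rrefl (alpha k) a"
  let ?t = "a \<bullet> coroot (alpha k)"
  have bR: "?b \<in> R" using rrefl_root simple_root[OF k] Rp_root[OF a] by blast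
  assume "?b \<notin> Rp"
  then have "-?b \<in> Rp" using R_Rp_Rm bR Rm_iff_uminus_Rp by blast
  then obtain d :: "nat \<Rightarrow> int" where d: "\<forall>j. 0 \<le> d j" "-?b = (\<Sum>j\<in>{Suc 0..DIM('a)}. of_int (d j) *\<^sub>R alpha j)"
    using Rp_nonneg_int_comb by blast
  obtain c :: "nat \<Rightarrow> int" where c: "\<forall>j. 0 \<le> c j" "a = (\<Sum>j\<in>{Suc 0..DIM('a)}. of_int (c j) *\<^sub>R alpha j)"
    using Rp_nonneg_int_comb[OF a] by blast
  have mb: "-?b = ?t *\<^sub>R alpha k - a" by (simp add: rrefl_def)
  have "(\<Sum>j\<in>{Suc 0..DIM('a)}. (of_int (c j) + of_int (d j) - (if j = k then ?t else 0)) *\<^sub>R alpha j)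
      = (\<Sum>j\<in>{Suc 0..DIM('a)}. of_int (c j) *\<^sub>R alpha j) + (\<Sum>j\<in>{Suc 0..DIM('a)}. of_int (d j) *\<^sub>R alpha j)
        - (\<Sum>j\<in>{Suc 0..DIM('a)}. (if j = k then ?t else 0) *\<^sub>R alpha j)"
    by (simp add: scaleR_add_left scaleR_diff_left sum.distrib sum_subtractf)
  also have "\<dots> = a + (-?b) - ?t *\<^sub>R alpha k" using c d sum_delta_alpha[OF k] by simp
  also have "\<dots> = 0" using mb by simp
  finally have eq: "(\<Sum>j\<in>{Suc 0..DIM('a)}. (of_int (c j) + of_int (d j) - (if j = k then ?t else 0)) *\<^sub>R alpha j) = 0" .
  have cz: "\<forall>j\<in>{Suc 0..DIM('a)}. j \<noteq> k \<longrightarrow> c j = 0"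
  proof (intro ballI impI)
    fix j assume j: "j \<in> {Suc 0..DIM('a)}" "j \<noteq> k"
    have "of_int (c j) + of_int (d j) - (if j = k then ?t else 0) = (0::real)"
      using simple_coeff_zero[OF eq j(1)] .
    then have "c j + d j = 0" using j(2) by simp
    then show "c j = 0" using c(1) d(1) by (metis add_nonneg_eq_0_iff)
  qed
  have "a = (\<Sum>j\<in>{Suc 0..DIM('a)}. (if j = k then of_int (c k) else 0) *\<^sub>R alpha j)"
    using c(2) cz by (auto intro!: sum.cong)
  also have "\<dots> = of_int (c k) *\<^sub>R alpha k" by (rule sum_delta_alpha[OF k])
  finally have ak: "a = of_int (c k) *\<^sub>R alpha k" .
  then have "of_int (c k) = (1::real) \<or> of_int (c k) = (-1::real)"
    using root_multiple[OF simple_root[OF k]] Rp_root[OF a] by metis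
  then have "c k = 1 \<or> c k = -1" by (metis of_int_eq_1_iff of_int_eq_iff of_int_minus of_int_1)
  then have "c k = 1" using c(1)[rule_format, of k] by auto
  then show False using ak ne by simp
qed

lemma rrefl_simple_Rm_eq: "k \<in> {Suc 0..DIM('a)} \<Longrightarrow> a \<in> Rp \<Longrightarrow> rrefl (alpha k) a \<in> Rm \<Longrightarrow> a = alpha k"
  using rrefl_simple_Rp Rp_not_Rm by blast

lemma rrefl_simple_Rm_iff:
  assumes k: "k \<in> {Suc 0..DIM('a)}" and b: "b \<in> R" "b \<noteq> alpha k" "b \<noteq> - alpha k"
  shows "rrefl (alpha k) b \<in> Rm \<longleftrightarrow> b \<in> Rm"
proof (cases "b \<in> Rp")
  case True
  have "rrefl (alpha k) b \<in> Rp" using rrefl_simple_Rp[OF k True b(2)] .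
  then show ?thesis using True Rp_not_Rm by blast
next
  case False
  then have bm: "b \<in> Rm" using b(1) R_Rp_Rm by blast
  have "- b \<noteq> alpha k" using b(3) by (metis minus_minus)
  then have "rrefl (alpha k) (- b) \<in> Rp" using rrefl_simple_Rp[OF k] bm Rm_iff_uminus_Rp by blast
  then show ?thesis using bm linear_neg[OF linear_rrefl] Rm_iff_uminus_Rp by (metis minus_minus)
qed

lemma rrefl_simple_W0: "k \<in> {Suc 0..DIM('a)} \<Longrightarrow> rrefl (alpha k) \<in> W0 R"
  using rrefl_W0 simple_root by blast

lemma inv_set_rrefl_simple: "j \<in> {Suc 0..DIM('a)} \<Longrightarrow> inv_set R alpha (rrefl (alpha j)) = {alpha j}"
proof -
  assume j: "j \<in> {Suc 0..DIM('a)}"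
  have "rrefl (alpha j) (alpha j) \<in> Rm" using simple_nonzero[OF j] simple_Rp[OF j] uminus_Rp_Rm
    by (simp add: rrefl_self)
  then show ?thesis using rrefl_simple_Rm_eq[OF j] simple_Rp[OF j] by (auto simp: inv_set_def)
qed


lemma inner_coroot_simple_pos: "k \<in> {Suc 0..DIM('a)} \<Longrightarrow> 0 < a \<bullet> alpha k \<Longrightarrow> 0 < a \<bullet> coroot (alpha k)"
  using simple_nonzero by (simp add: coroot_def)

lemma inner_simple_rho_vee: assumes k: "k \<in> {Suc 0..DIM('a)}" shows "alpha k \<bullet> rho_vee R alpha = 1"
proof -
  let ?s = "rrefl (alpha k)"
  define f where "f a = alpha k \<bullet> coroot a" for a
  let ?T = "Rp - {alpha k}"
  have fin: "finite ?T" using finite_Rp by simp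
  have Tb: "a \<in> ?T \<Longrightarrow> ?s a \<in> ?T" for a
  proof -
    assume a: "a \<in> ?T"
    have "?s a \<in> Rp" using rrefl_simple_Rp[OF k] a by blast
    moreover have "?s a \<noteq> alpha k"
    proof
      assume "?s a = alpha k"
      then have "a = ?s (alpha k)" using rrefl_rrefl simple_nonzero[OF k] by metis
      then have "a = - alpha k" using rrefl_self simple_nonzero[OF k] by simp
      then show False using a uminus_Rp_Rm[OF simple_Rp[OF k]] Rp_not_Rm by auto
    qed
    ultimately show ?thesis by simp
  qed
  have inv: "?s (?s a) = a" for a using simple_nonzero[OF k] by (simp add: rrefl_rrefl)
  have "sum f ?T = sum (\<lambda>a. f (?s a)) ?T"
    using Tb by (intro sum.reindex_bij_witness[of _ ?s ?s]) (auto simp: inv)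
  also have "\<dots> = sum (\<lambda>a. - f a) ?T"
  proof (rule sum.cong[OF refl])
    fix a
    have "f (?s a) = alpha k \<bullet> ?s (coroot a)"
      unfolding f_def using orthogonal_transformation_coroot[OF orthogonal_transformation_rrefl[OF simple_nonzero[OF k]]] by simp
    also have "\<dots> = - f a" using inner_rrefl_self[OF simple_nonzero[OF k]] f_def by simp
    finally show "f (?s a) = - f a" .
  qed
  also have "\<dots> = - sum f ?T" by (simp add: sum_negf)
  finally have T0: "sum f ?T = 0" by simp
  have "sum f Rp = f (alpha k) + sum f ?T"
    using sum.remove[OF finite_Rp simple_Rp[OF k]] by simp
  also have "\<dots> = 2" using T0 inner_coroot_self[OF simple_nonzero[OF k]] f_def by simp
  finally have "sum f Rp = 2" .
  then show ?thesis
    by (simp add: rho_vee_def f_def inner_sum_right)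
qed

definition height :: "'a \<Rightarrow> real" where "height a = a \<bullet> rho_vee R alpha"

lemma height_Rp_nat: assumes a: "a \<in> Rp" shows "\<exists>n::nat. height a = real n \<and> 1 \<le> n"
proof -
  obtain c :: "nat \<Rightarrow> int" where c: "\<forall>j. 0 \<le> c j" "a = (\<Sum>j\<in>{Suc 0..DIM('a)}. of_int (c j) *\<^sub>R alpha j)"
    using Rp_nonneg_int_comb[OF a] by blast
  have "height a = (\<Sum>j\<in>{Suc 0..DIM('a)}. of_int (c j) * (alpha j \<bullet> rho_vee R alpha))"
    unfolding height_def using c(2) by (simp add: inner_sum_left)
  also have "\<dots> = of_int (\<Sum>j\<in>{Suc 0..DIM('a)}. c j)" using inner_simple_rho_vee by simp
  finally have h: "height a = of_int (\<Sum>j\<in>{Suc 0..DIM('a)}. c j)" .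
  have nn: "0 \<le> (\<Sum>j\<in>{Suc 0..DIM('a)}. c j)" using c(1) by (simp add: sum_nonneg)
  have "(\<Sum>j\<in>{Suc 0..DIM('a)}. c j) \<noteq> 0"
  proof
    assume "(\<Sum>j\<in>{Suc 0..DIM('a)}. c j) = 0"
    then have "\<forall>j\<in>{Suc 0..DIM('a)}. c j = 0" using c(1) sum_nonneg_eq_0_iff[of "{Suc 0..DIM('a)}" c]
      by auto
    then have "a = 0" using c(2) by simp
    then show False using a Rp_root zero_notin_R by auto
  qed
  then show ?thesis using h nn by (intro exI[of _ "nat (\<Sum>j\<in>{Suc 0..DIM('a)}. c j)"]) auto
qed

lemma height_Rp_ge1: "a \<in> Rp \<Longrightarrow> 1 \<le> height a" using height_Rp_nat by fastforce

lemma Rp_ex_simple_acute: assumes a: "a \<in> Rp" shows "\<exists>k\<in>{Suc 0..DIM('a)}. 0 < a \<bullet> alpha k"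
proof (rule ccontr)
  assume "\<not> ?thesis"
  then have h: "\<forall>k\<in>{Suc 0..DIM('a)}. a \<bullet> alpha k \<le> 0" by auto
  obtain c :: "nat \<Rightarrow> int" where c: "\<forall>j. 0 \<le> c j" "a = (\<Sum>j\<in>{Suc 0..DIM('a)}. of_int (c j) *\<^sub>R alpha j)"
    using Rp_nonneg_int_comb[OF a] by blast
  have "a \<bullet> a = a \<bullet> (\<Sum>j\<in>{Suc 0..DIM('a)}. of_int (c j) *\<^sub>R alpha j)"
    by (simp only: c(2)[symmetric])
  also have "\<dots> = (\<Sum>j\<in>{Suc 0..DIM('a)}. of_int (c j) * (a \<bullet> alpha j))"
    by (simp add: inner_sum_right)
  also have "\<dots> \<le> 0" using h c(1) by (intro sum_nonpos) (simp add: mult_nonneg_nonpos)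
  finally have "a = 0" by (metis inner_gt_zero_iff not_less)
  then show False using a Rp_root zero_notin_R by auto
qed

lemma coroot_Rp_nonneg_comb:
  assumes a: "a \<in> Rp"
  shows "\<exists>d. (\<forall>j. 0 \<le> d j) \<and> coroot a = (\<Sum>j\<in>{Suc 0..DIM('a)}. d j *\<^sub>R coroot (alpha j))"
proof -
  obtain c :: "nat \<Rightarrow> int" where c: "\<forall>j. 0 \<le> c j" "a = (\<Sum>j\<in>{Suc 0..DIM('a)}. of_int (c j) *\<^sub>R alpha j)"
    using Rp_nonneg_int_comb[OF a] by blast
  have an: "a \<bullet> a > 0" using a Rp_root zero_notin_R by auto
  define d where "d j = of_int (c j) * (alpha j \<bullet> alpha j) / (a \<bullet> a)" for j
  have "coroot a = (2 / (a \<bullet> a)) *\<^sub>R (\<Sum>j\<in>{Suc 0..DIM('a)}. of_int (c j) *\<^sub>R alpha j)"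
    by (simp only: c(2)[symmetric]) (simp add: coroot_def)
  also have "\<dots> = (\<Sum>j\<in>{Suc 0..DIM('a)}. d j *\<^sub>R coroot (alpha j))"
    unfolding scaleR_sum_right
  proof (rule sum.cong[OF refl])
    fix j assume j: "j \<in> {Suc 0..DIM('a)}"
    have "alpha j \<bullet> alpha j \<noteq> 0" using simple_nonzero[OF j] by simp
    then show "(2 / (a \<bullet> a)) *\<^sub>R of_int (c j) *\<^sub>R alpha j = d j *\<^sub>R coroot (alpha j)"
      using an by (simp add: d_def coroot_def)
  qed
  finally show ?thesis using c(1) an by (intro exI[of _ d]) (auto simp: d_def)
qed

lemma nonneg_pairing_Rp_if_simple:
  assumes x: "\<forall>k\<in>{Suc 0..DIM('a)}. 0 \<le> x \<bullet> coroot (alpha k)" and a: "a \<in> Rp"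
  shows "0 \<le> x \<bullet> coroot a"
proof -
  obtain d where d: "\<forall>j. 0 \<le> d j" "coroot a = (\<Sum>j\<in>{Suc 0..DIM('a)}. d j *\<^sub>R coroot (alpha j))"
    using coroot_Rp_nonneg_comb[OF a] by blast
  have "x \<bullet> coroot a = (\<Sum>j\<in>{Suc 0..DIM('a)}. d j * (x \<bullet> coroot (alpha j)))" using d(2)
    by (simp add: inner_sum_right)
  also have "\<dots> \<ge> 0" using d(1) x by (intro sum_nonneg) auto
  finally show ?thesis by simp
qed


primrec word :: "nat list \<Rightarrow> 'a \<Rightarrow> 'a" where
  "word [] = id"
| "word (j # js) = rrefl (alpha j) \<circ> word js"

lemma word_append: "word (xs @ ys) = word xs \<circ> word ys"
  by (induction xs) (auto simp: comp_assoc)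

lemma word_W0: "set js \<subseteq> {Suc 0..DIM('a)} \<Longrightarrow> word js \<in> W0 R"
proof (induction js)
  case Nil show ?case by (simp only: word.simps) (rule W0.W0_id)
next
  case (Cons j js) then show ?case using W0.W0_step[of "word js" R "alpha j"] simple_root[of j]
    by (simp add: comp_def)
qed

lemma height_induct[consumes 1, case_names simple step]:
  assumes a0: "a0 \<in> Rp"
    and simple: "\<And>k. k \<in> {Suc 0..DIM('a)} \<Longrightarrow> P (alpha k)"
    and step: "\<And>a k. a \<in> Rp \<Longrightarrow> k \<in> {Suc 0..DIM('a)} \<Longrightarrow> a \<noteq> alpha k \<Longrightarrow> 0 < a \<bullet> alpha k \<Longrightarrow>
        P (rrefl (alpha k) a) \<Longrightarrow> P a"
  shows "P a0"
proof -
  have "\<forall>a\<in>Rp. height a \<le> real n \<longrightarrow> P a" for n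
  proof (induction n)
    case 0 then show ?case using height_Rp_ge1 by fastforce
  next
    case (Suc n)
    show ?case
    proof (intro ballI impI)
      fix a assume a: "a \<in> Rp" and h: "height a \<le> real (Suc n)"
      show "P a"
      proof (cases "\<exists>k\<in>{Suc 0..DIM('a)}. a = alpha k")
        case True then show ?thesis using simple by auto
      next
        case False
        obtain k where k: "k \<in> {Suc 0..DIM('a)}" "0 < a \<bullet> alpha k" using Rp_ex_simple_acute[OF a]
          by blast
        have ne: "a \<noteq> alpha k" using False k by auto
        have b: "rrefl (alpha k) a \<in> Rp" using rrefl_simple_Rp[OF k(1) a ne] .
        have "height (rrefl (alpha k) a) = height a - (a \<bullet> coroot (alpha k))"
          by (simp add: height_def rrefl_def inner_diff_left inner_simple_rho_vee[OF k(1)])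
        moreover have "1 \<le> a \<bullet> coroot (alpha k)"
          using Ints_pos_ge1 root_pairing_int[OF simple_root[OF k(1)] Rp_root[OF a]] inner_coroot_simple_pos[OF k] by blast
        ultimately have "height (rrefl (alpha k) a) \<le> real n" using h by simp
        then have "P (rrefl (alpha k) a)" using Suc.IH b by blast
        then show "P a" using step a k ne by blast
      qed
    qed
  qed
  then show ?thesis using height_Rp_nat[OF a0] a0 by fastforce
qed

lemma rrefl_Rp_word: "a \<in> Rp \<Longrightarrow> \<exists>js. set js \<subseteq> {Suc 0..DIM('a)} \<and> rrefl a = word js"
proof (induction rule: height_induct)
  case (simple k) then show ?case by (intro exI[of _ "[k]"]) auto
next
  case (step a k)
  then obtain js where js: "set js \<subseteq> {Suc 0..DIM('a)}" "rrefl (rrefl (alpha k) a) = word js"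
    using rrefl_simple_Rp[OF step(2) step(1) step(3)] by blast
  have aa: "rrefl (alpha k) (rrefl (alpha k) a) = a" using simple_nonzero[OF step(2)]
    by (simp add: rrefl_rrefl)
  have "rrefl a = rrefl (alpha k) \<circ> rrefl (rrefl (alpha k) a) \<circ> rrefl (alpha k)"
    using rrefl_rrefl_conj[OF simple_nonzero[OF step(2)], of "rrefl (alpha k) a"] aa
      by (auto simp: fun_eq_iff)
  also have "\<dots> = word (k # js @ [k])" using js by (simp add: word_append comp_assoc)
  finally show ?case using js step(2) by (intro exI[of _ "k # js @ [k]"]) auto
qed

lemma rrefl_word: "a \<in> R \<Longrightarrow> \<exists>js. set js \<subseteq> {Suc 0..DIM('a)} \<and> rrefl a = word js"
  by (metis R_Rp_Rm UnE Rm_iff_uminus_Rp rrefl_Rp_word rrefl_uminus minus_minus)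

lemma W0_word: "w \<in> W0 R \<Longrightarrow> \<exists>js. set js \<subseteq> {Suc 0..DIM('a)} \<and> w = word js"
proof (induction rule: W0.induct)
  case W0_id then show ?case by (intro exI[of _ "[]"]) auto
next
  case (W0_step w a)
  then obtain js where js: "set js \<subseteq> {Suc 0..DIM('a)}" "w = word js" by blast
  obtain ks where ks: "set ks \<subseteq> {Suc 0..DIM('a)}" "rrefl a = word ks" using rrefl_word W0_step
    by blast
  show ?case using js ks by (intro exI[of _ "ks @ js"]) (simp add: word_append)
qed

lemma word_exchange:
  "set js \<subseteq> {Suc 0..DIM('a)} \<Longrightarrow> k \<in> {Suc 0..DIM('a)} \<Longrightarrow> word js (alpha k) \<in> Rm \<Longrightarrow>
    \<exists>js'. set js' \<subseteq> {Suc 0..DIM('a)} \<and> length js' < length js \<and> word js' = word js \<circ> rrefl (alpha k)"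
proof (induction js)
  case Nil then show ?case using simple_Rp Rp_not_Rm by auto
next
  case (Cons j rest)
  let ?g = "word rest"
  have j: "j \<in> {Suc 0..DIM('a)}" and rest: "set rest \<subseteq> {Suc 0..DIM('a)}" using Cons by auto
  have gW: "?g \<in> W0 R" using word_W0[OF rest] .
  have bR: "?g (alpha k) \<in> R" using W0_root[OF gW simple_root[OF Cons(3)]] .
  show ?case
  proof (cases "?g (alpha k) \<in> Rm")
    case True
    then obtain rest' where r: "set rest' \<subseteq> {Suc 0..DIM('a)}" "length rest' < length rest" "word rest' = ?g \<circ> rrefl (alpha k)"
      using Cons rest by blast
    show ?thesis using r j by (intro exI[of _ "j # rest'"]) (auto simp: comp_assoc)
  next
    case False
    then have gp: "?g (alpha k) \<in> Rp" using bR R_Rp_Rm by blast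
    have "rrefl (alpha j) (?g (alpha k)) \<in> Rm" using Cons(4) by simp
    then have ga: "?g (alpha k) = alpha j" using rrefl_simple_Rm_eq[OF j gp] by blast
    have c: "rrefl (alpha j) (?g x) = ?g (rrefl (alpha k) x)" for x
      using orthogonal_transformation_rrefl_conj[OF orthogonal_transformation_W0[OF gW], of "alpha k" x] ga by simp
    have eq: "word (j # rest) \<circ> rrefl (alpha k) = ?g"
    proof
      fix x
      have "(word (j # rest) \<circ> rrefl (alpha k)) x = rrefl (alpha j) (?g (rrefl (alpha k) x))"
        by simp
      also have "\<dots> = rrefl (alpha j) (rrefl (alpha j) (?g x))" using c by simp
      also have "\<dots> = ?g x" using simple_nonzero[OF j] by (simp add: rrefl_rrefl)
      finally show "(word (j # rest) \<circ> rrefl (alpha k)) x = ?g x" .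
    qed
    show ?thesis
    proof (intro exI[of _ rest] conjI)
      show "set rest \<subseteq> {Suc 0..DIM('a)}" using rest .
      show "length rest < length (j # rest)" by simp
      show "word rest = word (j # rest) \<circ> rrefl (alpha k)" using eq by (rule sym)
    qed
  qed
qed

lemma W0_ex_simple_Rm: "w \<in> W0 R \<Longrightarrow> \<not> (\<forall>a\<in>Rp. w a \<in> Rp) \<Longrightarrow> \<exists>k\<in>{Suc 0..DIM('a)}. w (alpha k) \<in> Rm"
  using W0_Rp_if_simple_Rp W0_root simple_root R_Rp_Rm by blast

lemma word_eq_id_if_preserves_Rp: "set js \<subseteq> {Suc 0..DIM('a)} \<Longrightarrow> (\<forall>a\<in>Rp. word js a \<in> Rp) \<Longrightarrow>
    word js = id"
proof (induction "length js" arbitrary: js rule: less_induct)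
  case less
  show ?case
  proof (cases js rule: rev_cases)
    case Nil then show ?thesis by simp
  next
    case (snoc rest k)
    have k: "k \<in> {Suc 0..DIM('a)}" and rest: "set rest \<subseteq> {Suc 0..DIM('a)}" using less.prems snoc
      by auto
    have wj: "word js = word rest \<circ> rrefl (alpha k)" using snoc by (simp add: word_append)
    have jsW: "word js \<in> W0 R" using word_W0 less.prems by blast
    have "word rest (alpha k) = word rest (rrefl (alpha k) (rrefl (alpha k) (alpha k)))"
      using simple_nonzero[OF k] by (simp add: rrefl_rrefl)
    also have "\<dots> = word js (- alpha k)" using wj simple_nonzero[OF k] by (simp add: rrefl_self)
    also have "\<dots> = - word js (alpha k)" using W0_uminus[OF jsW] by simp
    finally have "word rest (alpha k) \<in> Rm" using less.prems(2) simple_Rp[OF k] uminus_Rp_Rm by auto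
    then obtain rest' where r: "set rest' \<subseteq> {Suc 0..DIM('a)}" "length rest' < length rest" "word rest' = word rest \<circ> rrefl (alpha k)"
      using word_exchange[OF rest k] by blast
    have "length rest' < length js" using r snoc by simp
    moreover have "word rest' = word js" using r wj by simp
    ultimately show ?thesis using less.hyps[of rest'] r less.prems by auto
  qed
qed

lemma W0_eq_id_if_preserves_Rp: "w \<in> W0 R \<Longrightarrow> (\<forall>a\<in>Rp. w a \<in> Rp) \<Longrightarrow> w = id"
  using W0_word word_eq_id_if_preserves_Rp by blast

lemma word_fixes_dominant: "set js \<subseteq> {Suc 0..DIM('a)} \<Longrightarrow> x \<in> dominant R alpha \<Longrightarrow>
    word js x \<in> dominant R alpha \<Longrightarrow> word js x = x"
proof (induction "length js" arbitrary: js rule: less_induct)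
  case less
  let ?g = "word js"
  have gW: "?g \<in> W0 R" using word_W0 less.prems by blast
  show ?case
  proof (cases "\<forall>a\<in>Rp. ?g a \<in> Rp")
    case True
    have "word js = id" using word_eq_id_if_preserves_Rp[OF less.prems(1) True] .
    then show ?thesis by simp
  next
    case False
    then obtain k where k: "k \<in> {Suc 0..DIM('a)}" "?g (alpha k) \<in> Rm" using W0_ex_simple_Rm[OF gW]
      by blast
    obtain js' where j': "set js' \<subseteq> {Suc 0..DIM('a)}" "length js' < length js" "word js' = ?g \<circ> rrefl (alpha k)"
      using word_exchange[OF less.prems(1) k] by blast
    have x1: "0 \<le> x \<bullet> coroot (alpha k)" using less.prems(2) simple_Rp[OF k(1)]
      by (simp add: dominant_iff)
    have "0 \<le> ?g x \<bullet> coroot (- ?g (alpha k))" using less.prems(3) k(2) Rm_iff_uminus_Rp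
      by (simp add: dominant_iff)
    also have "?g x \<bullet> coroot (- ?g (alpha k)) = - (x \<bullet> coroot (alpha k))"
      using W0_coroot[OF gW] W0_inner[OF gW] by (simp add: coroot_uminus)
    finally have "x \<bullet> coroot (alpha k) = 0" using x1 by simp
    then have sx: "rrefl (alpha k) x = x" by (simp add: rrefl_def)
    have "word js' x = ?g x" using j' sx by simp
    then have "word js' x = x" using less.hyps[of js'] j' less.prems by simp
    then show ?thesis using \<open>word js' x = ?g x\<close> by simp
  qed
qed

lemma W0_fixes_dominant: "w \<in> W0 R \<Longrightarrow> x \<in> dominant R alpha \<Longrightarrow> w x \<in> dominant R alpha \<Longrightarrow> w x = x"
  using W0_word word_fixes_dominant by blast


subsection \<open>Dominant representatives\<close>

definition neg_roots :: "'a \<Rightarrow> 'a set" where "neg_roots mu = {a \<in> Rp. mu \<bullet> coroot a < 0}"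

lemma finite_neg_roots: "finite (neg_roots mu)" using finite_Rp by (simp add: neg_roots_def)

lemma finite_inv_set: "finite (inv_set R alpha w)" using finite_Rp by (simp add: inv_set_def)

lemma inv_set_id: "inv_set R alpha id = {}"
  using Rp_not_Rm by (auto simp: inv_set_def)

lemma card_neg_roots_rrefl_simple_less:
  assumes k: "k \<in> {Suc 0..DIM('a)}" "mu \<bullet> coroot (alpha k) < 0"
  shows "card (neg_roots (rrefl (alpha k) mu)) < card (neg_roots mu)"
proof -
  let ?s = "rrefl (alpha k)"
  have ss: "?s (?s a) = a" for a using simple_nonzero[OF k(1)] by (simp add: rrefl_rrefl)
  have kN: "alpha k \<in> neg_roots mu" using k simple_Rp by (simp add: neg_roots_def)
  have "neg_roots (?s mu) \<subseteq> ?s ` (neg_roots mu - {alpha k})"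
  proof
    fix a assume a: "a \<in> neg_roots (?s mu)"
    then have aRp: "a \<in> Rp" and neg: "?s mu \<bullet> coroot a < 0" by (auto simp: neg_roots_def)
    have e: "?s mu \<bullet> coroot a = mu \<bullet> coroot (?s a)"
      using inner_rrefl_coroot[OF simple_nonzero[OF k(1)]] .
    have ne: "a \<noteq> alpha k"
    proof
      assume "a = alpha k"
      then have "?s mu \<bullet> coroot a = - (mu \<bullet> coroot (alpha k))"
        using e simple_nonzero[OF k(1)] by (simp add: rrefl_self coroot_uminus)
      then show False using neg k(2) by simp
    qed
    have "?s a \<noteq> alpha k"
    proof
      assume "?s a = alpha k"
      then have "a = - alpha k" using ss[of a] simple_nonzero[OF k(1)] by (metis rrefl_self)
      then show False using aRp simple_Rp[OF k(1)] uminus_Rp_Rm Rp_not_Rm by auto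
    qed
    then have "?s a \<in> neg_roots mu - {alpha k}"
      using rrefl_simple_Rp[OF k(1) aRp ne] e neg by (simp add: neg_roots_def)
    then show "a \<in> ?s ` (neg_roots mu - {alpha k})"
      by (auto intro!: image_eqI[of _ _ "?s a"] simp: ss)
  qed
  then have "card (neg_roots (?s mu)) \<le> card (?s ` (neg_roots mu - {alpha k}))"
    using finite_neg_roots by (intro card_mono) auto
  also have "\<dots> \<le> card (neg_roots mu - {alpha k})"
    by (rule card_image_le) (simp add: finite_neg_roots)
  also have "\<dots> < card (neg_roots mu)" by (rule card_Diff1_less[OF finite_neg_roots kN])
  finally show ?thesis .
qed

lemma inv_set_comp_rrefl_simple_subset:
  assumes k: "k \<in> {Suc 0..DIM('a)}" "mu \<bullet> coroot (alpha k) < 0"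
    and w: "inv_set R alpha w \<subseteq> neg_roots (rrefl (alpha k) mu)"
  shows "inv_set R alpha (w \<circ> rrefl (alpha k)) \<subseteq> neg_roots mu"
proof
  let ?s = "rrefl (alpha k)"
  fix a assume a: "a \<in> inv_set R alpha (w \<circ> ?s)"
  then have aRp: "a \<in> Rp" and m: "w (?s a) \<in> Rm" by (auto simp: inv_set_def)
  show "a \<in> neg_roots mu"
  proof (cases "a = alpha k")
    case True
    then show ?thesis using k simple_Rp by (simp add: neg_roots_def)
  next
    case False
    then have "?s a \<in> Rp" using rrefl_simple_Rp[OF k(1) aRp] by blast
    then have "?s a \<in> inv_set R alpha w" using m by (simp add: inv_set_def)
    then have "?s mu \<bullet> coroot (?s a) < 0" using w by (auto simp: neg_roots_def)
    then have "mu \<bullet> coroot a < 0"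
      using inner_rrefl_coroot[OF simple_nonzero[OF k(1)], of mu "?s a"] simple_nonzero[OF k(1)]
      by (simp add: rrefl_rrefl)
    then show ?thesis using aRp by (simp add: neg_roots_def)
  qed
qed

lemma ex_W0_dominant_inv_set_subset:
  "mu \<in> weights R \<Longrightarrow> \<exists>w\<in>W0 R. w mu \<in> dominant R alpha \<and> inv_set R alpha w \<subseteq> neg_roots mu"
proof (induction "card (neg_roots mu)" arbitrary: mu rule: less_induct)
  case less
  show ?case
  proof (cases "\<forall>k\<in>{Suc 0..DIM('a)}. 0 \<le> mu \<bullet> coroot (alpha k)")
    case True
    then have "mu \<in> dominant R alpha" using nonneg_pairing_Rp_if_simple less.prems
      by (simp add: dominant_iff)
    then show ?thesis using inv_set_id by (intro bexI[of _ id]) (auto intro: W0.W0_id)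
  next
    case False
    then obtain k where k: "k \<in> {Suc 0..DIM('a)}" "mu \<bullet> coroot (alpha k) < 0" by (auto simp: not_le)
    let ?s = "rrefl (alpha k)"
    obtain w where w: "w \<in> W0 R" "w (?s mu) \<in> dominant R alpha"
      "inv_set R alpha w \<subseteq> neg_roots (?s mu)"
      using less.hyps[OF card_neg_roots_rrefl_simple_less[OF k]]
        W0_weights[OF rrefl_simple_W0[OF k(1)] less.prems] by blast
    then show ?thesis
      using W0_comp[OF w(1) rrefl_simple_W0[OF k(1)]] inv_set_comp_rrefl_simple_subset[OF k w(3)]
      by (intro bexI[of _ "w \<circ> ?s"]) auto
  qed
qed

lemma neg_roots_subset_inv_set: assumes w: "w \<in> W0 R" "w mu \<in> dominant R alpha" shows "neg_roots mu \<subseteq> inv_set R alpha w"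
proof
  fix a assume a: "a \<in> neg_roots mu"
  then have aRp: "a \<in> Rp" and n: "mu \<bullet> coroot a < 0" by (auto simp: neg_roots_def)
  have "w a \<in> R" using W0_root[OF w(1) Rp_root[OF aRp]] .
  moreover have "w a \<notin> Rp"
  proof
    assume "w a \<in> Rp"
    then have "0 \<le> w mu \<bullet> coroot (w a)" using w(2) by (simp add: dominant_iff)
    also have "w mu \<bullet> coroot (w a) = mu \<bullet> coroot a" using W0_coroot[OF w(1)] W0_inner[OF w(1)]
      by simp
    finally show False using n by simp
  qed
  ultimately show "a \<in> inv_set R alpha w" using aRp R_Rp_Rm by (auto simp: inv_set_def)
qed

lemma W0_fixes_dominant_if_inv_set_orth:
  assumes w: "w \<in> W0 R" and lam: "lam \<in> dominant R alpha"
    and z: "\<forall>b\<in>inv_set R alpha w. lam \<bullet> coroot b = 0"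
  shows "w lam = lam"
proof (rule W0_fixes_dominant[OF w lam])
  have lw: "lam \<in> weights R" using lam dominant_iff by blast
  show "w lam \<in> dominant R alpha"
    unfolding dominant_iff
  proof (intro conjI ballI)
    show "w lam \<in> weights R" using W0_weights[OF w lw] .
    fix a assume a: "a \<in> Rp"
    let ?c = "inv w a"
    have cR: "?c \<in> R" using W0_root[OF W0_inv[OF w] Rp_root[OF a]] .
    have e: "w lam \<bullet> coroot a = lam \<bullet> coroot ?c" using W0_inner_coroot_inv[OF w] .
    show "0 \<le> w lam \<bullet> coroot a"
    proof (cases "?c \<in> Rp")
      case True then show ?thesis using e lam by (simp add: dominant_iff)
    next
      case False
      then have nc: "-?c \<in> Rp" using cR R_Rp_Rm Rm_iff_uminus_Rp by blast
      have "w (-?c) = - a" using W0_uminus[OF w] W0_apply_inv[OF w] by simp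
      then have "-?c \<in> inv_set R alpha w" using nc a uminus_Rp_Rm by (simp add: inv_set_def)
      then have "lam \<bullet> coroot (-?c) = 0" using z by blast
      then show ?thesis using e by (simp add: coroot_uminus)
    qed
  qed
qed


lemma ex_simple_acute_orthogonal:
  assumes y: "y \<in> Rp" and lam: "lam \<in> dominant R alpha" and ly: "lam \<bullet> coroot y = 1"
    and ybound: "\<And>j. j \<in> {Suc 0..DIM('a)} \<Longrightarrow> y \<bullet> coroot (alpha j) \<le> 1"
  shows "\<exists>k\<in>{Suc 0..DIM('a)}. 0 < y \<bullet> coroot (alpha k) \<and> lam \<bullet> coroot (alpha k) = 0"
proof (rule ccontr)
  assume "\<not> ?thesis"
  then have H: "\<And>k. k \<in> {Suc 0..DIM('a)} \<Longrightarrow> 0 < y \<bullet> coroot (alpha k) \<Longrightarrow> lam \<bullet> coroot (alpha k) \<noteq> 0"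
    by blast
  obtain d where d: "\<forall>j. 0 \<le> d j" "coroot y = (\<Sum>j\<in>{Suc 0..DIM('a)}. d j *\<^sub>R coroot (alpha j))"
    using coroot_Rp_nonneg_comb[OF y] by blast
  have le: "y \<bullet> coroot (alpha j) \<le> lam \<bullet> coroot (alpha j)" if j: "j \<in> {Suc 0..DIM('a)}" for j
  proof (cases "0 < y \<bullet> coroot (alpha j)")
    case True
    have l0: "0 \<le> lam \<bullet> coroot (alpha j)" using lam simple_Rp[OF j] by (simp add: dominant_iff)
    have "lam \<bullet> coroot (alpha j) \<in> \<int>"
      using lam weights_pairing_int[OF _ simple_root[OF j]] by (simp add: dominant_iff)
    then have "1 \<le> lam \<bullet> coroot (alpha j)" using H[OF j True] Ints_pos_ge1 l0 by simp
    then show ?thesis using ybound[OF j] by simp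
  next
    case False
    moreover have "0 \<le> lam \<bullet> coroot (alpha j)" using lam simple_Rp[OF j] by (simp add: dominant_iff)
    ultimately show ?thesis by simp
  qed
  have "y \<bullet> coroot y = (\<Sum>j\<in>{Suc 0..DIM('a)}. d j * (y \<bullet> coroot (alpha j)))"
    using d(2) by (simp add: inner_sum_right)
  also have "\<dots> \<le> (\<Sum>j\<in>{Suc 0..DIM('a)}. d j * (lam \<bullet> coroot (alpha j)))"
    using le d(1) by (intro sum_mono mult_left_mono) auto
  also have "\<dots> = lam \<bullet> coroot y" using d(2) by (simp add: inner_sum_right)
  finally show False using inner_coroot_self[OF root_nonzero[OF Rp_root[OF y]]] ly by simp
qed

subsection \<open>The length function\<close>

lemma alcove_pairing_Rp: "y \<in> alcove R alpha \<Longrightarrow> b \<in> Rp \<Longrightarrow> 0 < y \<bullet> coroot b \<and> y \<bullet> coroot b < 1"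
  by (simp add: alcove_def)

lemma alcove_pairing_Rm: "y \<in> alcove R alpha \<Longrightarrow> b \<in> Rm \<Longrightarrow> -1 < y \<bullet> coroot b \<and> y \<bullet> coroot b < 0"
  using alcove_pairing_Rp[of y "-b"] Rm_iff_uminus_Rp by (simp add: coroot_uminus)

lemma rho_vee_pairing_pos: "a \<in> Rp \<Longrightarrow> 0 < rho_vee R alpha \<bullet> coroot a"
proof -
  assume a: "a \<in> Rp"
  have "a \<bullet> a > 0" using a Rp_root zero_notin_R by auto
  moreover have "0 < height a" using height_Rp_ge1[OF a] by simp
  ultimately show ?thesis by (simp add: coroot_def height_def inner_commute)
qed

lemma alcove_nonempty: "\<exists>x. x \<in> alcove R alpha"
proof -
  let ?S = "\<Sum>a\<in>Rp. rho_vee R alpha \<bullet> coroot a"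
  have Spos: "0 \<le> ?S" using rho_vee_pairing_pos by (intro sum_nonneg) (simp add: less_imp_le)
  define t where "t = 1 / (1 + ?S)"
  have t: "0 < t" using Spos by (simp add: t_def)
  have "t *\<^sub>R rho_vee R alpha \<in> alcove R alpha"
    unfolding alcove_def
  proof (intro CollectI ballI conjI)
    fix a assume a: "a \<in> Rp"
    have p: "0 < rho_vee R alpha \<bullet> coroot a" using rho_vee_pairing_pos[OF a] .
    show "0 < t *\<^sub>R rho_vee R alpha \<bullet> coroot a" using p t by simp
    have "rho_vee R alpha \<bullet> coroot a \<le> ?S"
      using finite_Rp a rho_vee_pairing_pos by (intro member_le_sum) (auto simp: less_imp_le)
    then have "rho_vee R alpha \<bullet> coroot a < 1 + ?S" by simp
    then show "t *\<^sub>R rho_vee R alpha \<bullet> coroot a < 1"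
      using Spos by (simp add: t_def field_simps)
  qed
  then show ?thesis by blast
qed

lemma len_affine:
  assumes v: "v \<in> W0 R" and m: "m \<in> weights R"
  shows "len R alpha (\<lambda>x. v x + m) = (\<Sum>a\<in>Rp. nat \<bar>\<lfloor>m \<bullet> coroot a\<rfloor> - (if inv v a \<in> Rm then 1 else 0)\<bar>)"
proof -
  let ?A = "alcove R alpha"
  define d where "d a = \<lfloor>m \<bullet> coroot a\<rfloor> - (if inv v a \<in> Rm then 1 else 0)" for a
  define K where "K a = {k::int. \<exists>x\<in>?A. \<exists>y\<in>?A. (x \<bullet> coroot a - of_int k) * ((v y + m) \<bullet> coroot a - of_int k) < 0}" for a
  have set: "{(a, k). a \<in> Rp \<and> (\<exists>x\<in>?A. \<exists>y\<in>?A. (x \<bullet> coroot a - of_int k) * ((v y + m) \<bullet> coroot a - of_int k) < 0)} = Sigma Rp K"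
    unfolding K_def by (auto; blast)
  have Ane: "?A \<noteq> {}" using alcove_nonempty by blast
  have each: "K a = {k. 1 \<le> k \<and> k \<le> d a} \<union> {k. d a + 1 \<le> k \<and> k \<le> 0}" if a: "a \<in> Rp" for a
  proof -
    have aR: "a \<in> R" using Rp_root[OF a] .
    have mi: "m \<bullet> coroot a = of_int \<lfloor>m \<bullet> coroot a\<rfloor>" using weights_pairing_int[OF m aR]
      by (simp add: Ints_def)
    have vR: "inv v a \<in> R" using W0_root[OF W0_inv[OF v] aR] .
    have hv: "(v y + m) \<bullet> coroot a = y \<bullet> coroot (inv v a) + of_int \<lfloor>m \<bullet> coroot a\<rfloor>" for y
    proof -
      have "v y \<bullet> coroot a = v y \<bullet> v (inv v (coroot a))" using W0_apply_inv[OF v] by simp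
      also have "\<dots> = y \<bullet> inv v (coroot a)" using W0_inner[OF v] by simp
      also have "\<dots> = y \<bullet> coroot (inv v a)" using W0_coroot[OF W0_inv[OF v]] by simp
      finally show ?thesis using mi by (simp add: inner_add_left)
    qed
    have h: "\<forall>y\<in>?A. of_int (d a) < (v y + m) \<bullet> coroot a \<and> (v y + m) \<bullet> coroot a < of_int (d a) + 1"
    proof
      fix y assume y: "y \<in> ?A"
      show "of_int (d a) < (v y + m) \<bullet> coroot a \<and> (v y + m) \<bullet> coroot a < of_int (d a) + 1"
      proof (cases "inv v a \<in> Rm")
        case True
        then show ?thesis using alcove_pairing_Rm[OF y True] hv[of y] by (simp add: d_def)
      next
        case False
        then have "inv v a \<in> Rp" using vR R_Rp_Rm by blast
        then show ?thesis using alcove_pairing_Rp[OF y] False hv[of y] by (simp add: d_def)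
      qed
    qed
    have g: "\<forall>x\<in>?A. 0 < x \<bullet> coroot a \<and> x \<bullet> coroot a < 1" using alcove_pairing_Rp a by blast
    show ?thesis unfolding K_def using separating_levels[OF Ane g h] .
  qed
  have "len R alpha (\<lambda>x. v x + m) = card (Sigma Rp K)"
    unfolding len_def using set by simp
  also have "\<dots> = (\<Sum>a\<in>Rp. card (K a))"
    using finite_Rp each finite_levels by (intro card_SigmaI) auto
  also have "\<dots> = (\<Sum>a\<in>Rp. nat \<bar>d a\<bar>)"
    using each card_levels by (intro sum.cong) auto
  finally show ?thesis by (simp add: d_def)
qed

lemma len_W0: assumes w: "w \<in> W0 R" shows "len R alpha w = card (inv_set R alpha w)"
proof -
  let ?w' = "inv w"
  have ww: "w = (\<lambda>x. w x + 0)" by simp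
  have "len R alpha w = (\<Sum>a\<in>Rp. nat \<bar>\<lfloor>0 \<bullet> coroot a\<rfloor> - (if ?w' a \<in> Rm then 1 else 0)\<bar>)"
    using len_affine[OF w zero_weights] by (subst ww) simp
  also have "\<dots> = (\<Sum>a\<in>Rp. of_bool (?w' a \<in> Rm))"
    by (intro sum.cong) auto
  also have "\<dots> = card (Rp \<inter> {a. ?w' a \<in> Rm})" using finite_Rp by simp
  also have "\<dots> = card (inv_set R alpha w)"
  proof (rule bij_betw_same_card[symmetric])
    show "bij_betw (\<lambda>b. - w b) (inv_set R alpha w) (Rp \<inter> {a. ?w' a \<in> Rm})"
    proof (rule bij_betw_byWitness[where f' = "\<lambda>a. - ?w' a"])
      show "\<forall>b\<in>inv_set R alpha w. - ?w' (- w b) = b"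
        using W0_inv_apply[OF w] W0_uminus[OF W0_inv[OF w]] by simp
      show "\<forall>a\<in>Rp \<inter> {a. ?w' a \<in> Rm}. - w (- ?w' a) = a"
        using W0_apply_inv[OF w] W0_uminus[OF w] by simp
      show "(\<lambda>b. - w b) ` inv_set R alpha w \<subseteq> Rp \<inter> {a. ?w' a \<in> Rm}"
        using W0_inv_apply[OF w] W0_uminus[OF W0_inv[OF w]]
        by (auto simp: inv_set_def Rm_iff_uminus_Rp)
      show "(\<lambda>a. - ?w' a) ` (Rp \<inter> {a. ?w' a \<in> Rm}) \<subseteq> inv_set R alpha w"
        using W0_apply_inv[OF w] W0_uminus[OF w]
        by (auto simp: inv_set_def Rm_iff_uminus_Rp)
    qed
  qed
  finally show ?thesis .
qed


text \<open>An element of \<open>W0\<close> is determined by its inversion set: \<open>w2 \<circ> w\<inverse>\<close> then maps \<open>Rp\<close> into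
  itself.\<close>

lemma W0_eq_if_inv_set_eq:
  assumes w2: "w2 \<in> W0 R" and w: "w \<in> W0 R" and eq: "inv_set R alpha w2 = inv_set R alpha w"
  shows "w2 = w"
proof -
  define u where "u = w2 \<circ> inv w"
  have uW: "u \<in> W0 R" unfolding u_def using W0_comp[OF w2 W0_inv[OF w]] .
  have "\<forall>b\<in>Rp. u b \<in> Rp"
  proof
    fix b assume b: "b \<in> Rp"
    let ?a = "inv w b"
    have aR: "?a \<in> R" using W0_root[OF W0_inv[OF w] Rp_root[OF b]] .
    have wa: "w ?a = b" using W0_apply_inv[OF w] .
    show "u b \<in> Rp"
    proof (cases "?a \<in> Rp")
      case True
      then have "?a \<notin> inv_set R alpha w" using wa b Rp_not_Rm by (simp add: inv_set_def)
      then have "?a \<notin> inv_set R alpha w2" using eq by simp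
      then have "w2 ?a \<notin> Rm" using True by (simp add: inv_set_def)
      moreover have "w2 ?a \<in> R" using W0_root[OF w2 aR] .
      ultimately show ?thesis using R_Rp_Rm u_def by auto
    next
      case False
      then have na: "- ?a \<in> Rp" using aR R_Rp_Rm Rm_iff_uminus_Rp by blast
      have "w (- ?a) = - b" using W0_uminus[OF w] wa by simp
      then have "- ?a \<in> inv_set R alpha w2" using na b uminus_Rp_Rm eq by (simp add: inv_set_def)
      then have "- w2 ?a \<in> Rm" using W0_uminus[OF w2] by (simp add: inv_set_def)
      then show "u b \<in> Rp" using Rm_iff_uminus_Rp u_def by simp
    qed
  qed
  then have "u = id" using W0_eq_id_if_preserves_Rp uW by blast
  show "w2 = w"
  proof
    fix x
    have "w2 x = u (w x)" using W0_inv_apply[OF w] by (simp add: u_def)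
    then show "w2 x = w x" using \<open>u = id\<close> by simp
  qed
qed

lemma wmin_eq:
  assumes w: "w \<in> W0 R" "w mu \<in> dominant R alpha" "inv_set R alpha w \<subseteq> neg_roots mu"
  shows "wmin R alpha mu = w \<and> inv_set R alpha w = neg_roots mu"
proof -
  have N: "inv_set R alpha w = neg_roots mu" using w neg_roots_subset_inv_set by blast
  have lw: "len R alpha w = card (neg_roots mu)" using len_W0[OF w(1)] N by simp
  have minimal: "\<forall>v\<in>W0 R. v mu \<in> dominant R alpha \<longrightarrow> len R alpha w \<le> len R alpha v"
  proof (intro ballI impI)
    fix v assume v: "v \<in> W0 R" "v mu \<in> dominant R alpha"
    have "card (neg_roots mu) \<le> card (inv_set R alpha v)"
      using card_mono[OF finite_inv_set neg_roots_subset_inv_set[OF v]] .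
    then show "len R alpha w \<le> len R alpha v" using lw len_W0[OF v(1)] by simp
  qed
  have "wmin R alpha mu = w"
    unfolding wmin_def
  proof (rule the_equality)
    show "w \<in> W0 R \<and> w mu \<in> dominant R alpha \<and> (\<forall>v\<in>W0 R. v mu \<in> dominant R alpha \<longrightarrow> len R alpha w \<le> len R alpha v)"
      using w minimal by blast
  next
    fix w2 assume w2: "w2 \<in> W0 R \<and> w2 mu \<in> dominant R alpha \<and> (\<forall>v\<in>W0 R. v mu \<in> dominant R alpha \<longrightarrow> len R alpha w2 \<le> len R alpha v)"
    then have w2W: "w2 \<in> W0 R" and w2d: "w2 mu \<in> dominant R alpha" and le: "len R alpha w2 \<le> len R alpha w"
      using w by auto
    have sub: "neg_roots mu \<subseteq> inv_set R alpha w2" using neg_roots_subset_inv_set[OF w2W w2d] .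
    have "card (inv_set R alpha w2) \<le> card (neg_roots mu)" using le lw len_W0[OF w2W] by simp
    then have N2: "inv_set R alpha w2 = neg_roots mu" using card_seteq[OF finite_inv_set sub]
      by simp
    then show "w2 = w" using W0_eq_if_inv_set_eq[OF w2W w(1)] N by simp
  qed
  then show ?thesis using N by simp
qed

lemma rho_vee_W0_diff:
  assumes w: "w \<in> W0 R"
  shows "(w x - x) \<bullet> rho_vee R alpha = - (\<Sum>b\<in>inv_set R alpha w. x \<bullet> coroot b)"
proof -
  let ?w' = "inv w"
  let ?N = "inv_set R alpha w"
  define g where "g b = x \<bullet> coroot b" for b
  have w'W: "?w' \<in> W0 R" using W0_inv[OF w] .
  let ?P = "Rp \<inter> {a. ?w' a \<in> Rp}"
  let ?Q = "Rp - {a. ?w' a \<in> Rp}"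
  have NRp: "?N \<subseteq> Rp" by (auto simp: inv_set_def)
  have s1: "(\<Sum>a\<in>Rp. g (?w' a)) = (\<Sum>a\<in>?P. g (?w' a)) + (\<Sum>a\<in>?Q. g (?w' a))"
    by (rule sum.Int_Diff[OF finite_Rp])
  have s2: "(\<Sum>a\<in>?P. g (?w' a)) = (\<Sum>b\<in>Rp - ?N. g b)"
  proof (rule sum.reindex_bij_witness[of _ w ?w'])
    fix a assume a: "a \<in> ?P"
    show "w (?w' a) = a" using W0_apply_inv[OF w] .
    show "?w' a \<in> Rp - ?N" using a W0_apply_inv[OF w] Rp_not_Rm by (auto simp: inv_set_def)
    show "g (?w' a) = g (?w' a)" ..
  next
    fix b assume b: "b \<in> Rp - ?N"
    show "?w' (w b) = b" using W0_inv_apply[OF w] .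
    have "w b \<in> R" using W0_root[OF w] b Rp_root by blast
    then have "w b \<in> Rp" using b R_Rp_Rm by (auto simp: inv_set_def)
    then show "w b \<in> ?P" using W0_inv_apply[OF w] b by simp
  qed
  have s3: "(\<Sum>a\<in>?Q. g (?w' a)) = (\<Sum>b\<in>?N. - g b)"
  proof (rule sum.reindex_bij_witness[of _ "\<lambda>b. - w b" "\<lambda>a. - ?w' a"])
    fix a assume a: "a \<in> ?Q"
    show "- w (- ?w' a) = a" using W0_apply_inv[OF w] W0_uminus[OF w] by simp
    have "?w' a \<in> R" using W0_root[OF w'W] a Rp_root by blast
    then have m: "?w' a \<in> Rm" using a R_Rp_Rm by auto
    show "- ?w' a \<in> ?N" using m W0_apply_inv[OF w] W0_uminus[OF w] a uminus_Rp_Rm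
      by (simp add: inv_set_def Rm_iff_uminus_Rp)
    show "- g (- ?w' a) = g (?w' a)" by (simp add: g_def coroot_uminus)
  next
    fix b assume b: "b \<in> ?N"
    show "- ?w' (- w b) = b" using W0_inv_apply[OF w] W0_uminus[OF w'W] by simp
    have "- w b \<in> Rp" using b by (simp add: inv_set_def Rm_iff_uminus_Rp)
    moreover have "?w' (- w b) \<notin> Rp"
      using W0_inv_apply[OF w] W0_uminus[OF w'W] b uminus_Rp_Rm Rp_not_Rm
      by (auto simp: inv_set_def)
    ultimately show "- w b \<in> ?Q" by simp
  qed
  have s4: "(\<Sum>b\<in>Rp - ?N. g b) = (\<Sum>b\<in>Rp. g b) - (\<Sum>b\<in>?N. g b)" by (rule sum_diff[OF finite_Rp NRp])
  have lw': "linear ?w'" using orthogonal_transformation_W0[OF w'W] orthogonal_transformation_linear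
    by blast
  have rw: "?w' (rho_vee R alpha) = (1/2) *\<^sub>R (\<Sum>a\<in>Rp. coroot (?w' a))"
    unfolding rho_vee_def using W0_coroot[OF w'W]
    by (simp add: linear_scale[OF lw'] linear_sum[OF lw'])
  have "w x \<bullet> rho_vee R alpha = x \<bullet> ?w' (rho_vee R alpha)" using W0_inner_inv[OF w] .
  also have "\<dots> = (1/2) * (\<Sum>a\<in>Rp. g (?w' a))" unfolding rw by (simp add: g_def inner_sum_right)
  finally have A: "w x \<bullet> rho_vee R alpha = (1/2) * ((\<Sum>b\<in>Rp. g b) - 2 * (\<Sum>b\<in>?N. g b))"
    using s1 s2 s3 s4 by (simp add: sum_negf)
  have B: "x \<bullet> rho_vee R alpha = (1/2) * (\<Sum>b\<in>Rp. g b)"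
    unfolding rho_vee_def by (simp add: g_def inner_sum_right)
  show ?thesis using A B by (simp add: inner_diff_left g_def algebra_simps)
qed

lemma theta_eq_sum:
  assumes w: "w \<in> W0 R" "w mu \<in> dominant R alpha" "inv_set R alpha w \<subseteq> neg_roots mu"
  shows "theta R alpha mu = (\<Sum>b\<in>inv_set R alpha w. - (mu \<bullet> coroot b) - 1)"
proof -
  have wm: "wmin R alpha mu = w" using wmin_eq[OF w] by blast
  have "theta R alpha mu = (w mu - mu) \<bullet> rho_vee R alpha - real (card (inv_set R alpha w))"
    unfolding theta_def dom_rep_def wm using len_W0[OF w(1)] by simp
  also have "\<dots> = (\<Sum>b\<in>inv_set R alpha w. - (mu \<bullet> coroot b) - 1)"
    using rho_vee_W0_diff[OF w(1)] by (simp add: sum_subtractf sum_negf)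
  finally show ?thesis .
qed


lemma inner_sq_less_roots:
  assumes a: "a \<in> R" and b: "b \<in> R" and ab: "0 < a \<bullet> b" and ne: "a \<noteq> b"
  shows "(a \<bullet> b)\<^sup>2 < (a \<bullet> a) * (b \<bullet> b)"
proof -
  have na: "norm a > 0" using root_nonzero[OF a] by simp
  have nb: "norm b > 0" using root_nonzero[OF b] by simp
  have le: "\<bar>a \<bullet> b\<bar> \<le> norm a * norm b" by (rule Cauchy_Schwarz_ineq2)
  have "\<bar>a \<bullet> b\<bar> \<noteq> norm a * norm b"
  proof
    assume "\<bar>a \<bullet> b\<bar> = norm a * norm b"
    then have "norm a *\<^sub>R b = norm b *\<^sub>R a \<or> norm a *\<^sub>R b = - norm b *\<^sub>R a"
      using norm_cauchy_schwarz_abs_eq by blast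
    then obtain c where c: "b = c *\<^sub>R a"
    proof
      assume h: "norm a *\<^sub>R b = norm b *\<^sub>R a"
      have "b = (1 / norm a) *\<^sub>R (norm a *\<^sub>R b)" using na by simp
      also have "\<dots> = (norm b / norm a) *\<^sub>R a" using h by simp
      finally show ?thesis by (rule that)
    next
      assume h: "norm a *\<^sub>R b = - norm b *\<^sub>R a"
      have "b = (1 / norm a) *\<^sub>R (norm a *\<^sub>R b)" using na by simp
      also have "\<dots> = (- norm b / norm a) *\<^sub>R a" using h by simp
      finally show ?thesis by (rule that)
    qed
    then have "c = 1 \<or> c = -1" using root_multiple[OF a] b by blast
    then show False
    proof
      assume "c = 1" then show False using c ne by simp
    next
      assume "c = -1" then have "a \<bullet> b = - (a \<bullet> a)" using c by simp
      then show False using ab inner_ge_zero[of a] by linarith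
    qed
  qed
  then have "\<bar>a \<bullet> b\<bar> < norm a * norm b" using le by simp
  then have "\<bar>a \<bullet> b\<bar>\<^sup>2 < (norm a * norm b)\<^sup>2" by (rule power_strict_mono) auto
  then show ?thesis by (simp add: power_mult_distrib power2_norm_eq_inner)
qed

lemma acute_roots_pairing_one:
  assumes a: "a \<in> R" and b: "b \<in> R" and ab: "0 < a \<bullet> b" and ne: "a \<noteq> b"
  shows "a \<bullet> coroot b = 1 \<or> b \<bullet> coroot a = 1"
proof -
  let ?p = "a \<bullet> coroot b" and ?q = "b \<bullet> coroot a"
  have aa: "a \<bullet> a > 0" using root_nonzero[OF a] by simp
  have bb: "b \<bullet> b > 0" using root_nonzero[OF b] by simp
  have p: "?p = 2 * (a \<bullet> b) / (b \<bullet> b)" by (simp add: coroot_def)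
  have q: "?q = 2 * (a \<bullet> b) / (a \<bullet> a)" by (simp add: coroot_def inner_commute)
  have "?p * ?q = 4 * (a \<bullet> b)\<^sup>2 / ((a \<bullet> a) * (b \<bullet> b))" unfolding p q
    by (simp add: power2_eq_square field_simps)
  also have "\<dots> < 4" using inner_sq_less_roots[OF assms] aa bb by (simp add: field_simps)
  finally have pq: "?p * ?q < 4" .
  have pp: "0 < ?p" using p ab bb by simp
  have qp: "0 < ?q" using q ab aa by simp
  obtain P where P: "?p = of_int P" using root_pairing_int[OF b a] Ints_cases by blast
  obtain Q where Q: "?q = of_int Q" using root_pairing_int[OF a b] Ints_cases by blast
  have P1: "1 \<le> P" using pp P by simp
  have Q1: "1 \<le> Q" using qp Q by simp
  have "P * Q < 4" using pq P Q by (metis of_int_less_iff of_int_mult of_int_numeral)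
  then have "P = 1 \<or> Q = 1"
  proof -
    assume pq4: "P * Q < 4"
    have "\<not> (2 \<le> P \<and> 2 \<le> Q)"
    proof
      assume "2 \<le> P \<and> 2 \<le> Q"
      then have "2 * 2 \<le> P * Q" by (intro mult_mono) auto
      then show False using pq4 by simp
    qed
    then show ?thesis using P1 Q1 by auto
  qed
  then show ?thesis using P Q by auto
qed

lemma diff_acute_roots:
  assumes a: "a \<in> R" and b: "b \<in> R" and ab: "0 < a \<bullet> b" and ne: "a \<noteq> b"
  shows "a - b \<in> R"
  using acute_roots_pairing_one[OF assms]
proof
  assume "a \<bullet> coroot b = 1"
  then have "rrefl b a = a - b" by (simp add: rrefl_def)
  then show ?thesis using rrefl_root[OF b a] by simp
next
  assume "b \<bullet> coroot a = 1"
  then have "rrefl a b = b - a" by (simp add: rrefl_def)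
  then show ?thesis using rrefl_root[OF a b] uminus_root by fastforce
qed

lemma diff_coroot_acute_roots:
  assumes a: "a \<in> R" and b: "b \<in> R" and ab: "0 < a \<bullet> b" and ne: "a \<noteq> b"
  shows "\<exists>e\<in>R. coroot a - coroot b = coroot e"
  using acute_roots_pairing_one[OF assms]
proof
  assume p: "a \<bullet> coroot b = 1"
  have "coroot (rrefl a b) = rrefl a (coroot b)"
    using orthogonal_transformation_coroot[OF orthogonal_transformation_rrefl[OF root_nonzero[OF a]]] by simp
  also have "\<dots> = coroot b - (coroot b \<bullet> coroot a) *\<^sub>R a" by (simp add: rrefl_def)
  also have "(coroot b \<bullet> coroot a) *\<^sub>R a = (coroot b \<bullet> a) *\<^sub>R coroot a"
    by (rule inner_coroot_scaleR_swap)
  also have "coroot b \<bullet> a = 1" using p by (simp add: inner_commute)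
  finally have "coroot a - coroot b = coroot (- rrefl a b)" by (simp add: coroot_uminus)
  then show ?thesis using rrefl_root[OF a b] uminus_root by blast
next
  assume q: "b \<bullet> coroot a = 1"
  have "coroot (rrefl b a) = rrefl b (coroot a)"
    using orthogonal_transformation_coroot[OF orthogonal_transformation_rrefl[OF root_nonzero[OF b]]] by simp
  also have "\<dots> = coroot a - (coroot a \<bullet> coroot b) *\<^sub>R b" by (simp add: rrefl_def)
  also have "(coroot a \<bullet> coroot b) *\<^sub>R b = (coroot a \<bullet> b) *\<^sub>R coroot b"
    by (rule inner_coroot_scaleR_swap)
  also have "coroot a \<bullet> b = 1" using q by (simp add: inner_commute)
  finally have "coroot a - coroot b = coroot (rrefl b a)" by simp
  then show ?thesis using rrefl_root[OF b a] by blast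
qed

lemma simple_inner_nonpos:
  assumes i: "i \<in> {Suc 0..DIM('a)}" and j: "j \<in> {Suc 0..DIM('a)}" and ne: "i \<noteq> j"
  shows "alpha i \<bullet> alpha j \<le> 0"
proof (rule ccontr)
  assume "\<not> ?thesis"
  then have pos: "0 < alpha i \<bullet> alpha j" by simp
  have ne': "alpha i \<noteq> alpha j" using simple_inj i j ne by (auto dest: inj_onD)
  have dR: "alpha i - alpha j \<in> R"
    using diff_acute_roots[OF simple_root[OF i] simple_root[OF j] pos ne'] .
  define e where "e l = (if l = i then 1 else 0) - (if l = j then 1 else (0::real))" for l
  have de: "alpha i - alpha j = (\<Sum>l\<in>{Suc 0..DIM('a)}. e l *\<^sub>R alpha l)"
    unfolding e_def scaleR_diff_left sum_subtractf using sum_delta_alpha[OF i] sum_delta_alpha[OF j]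
      by simp
  show False
  proof (cases "alpha i - alpha j \<in> Rp")
    case True
    then obtain r where r: "\<forall>l. 0 \<le> r l" "alpha i - alpha j = (\<Sum>l\<in>{Suc 0..DIM('a)}. r l *\<^sub>R alpha l)"
      using Rp_pos_cone[OF True] unfolding pos_cone_def by blast
    have "r j = e j" using simple_coeff_eq[of r e j] r(2) de j by simp
    then show False using r(1)[rule_format, of j] ne by (simp add: e_def)
  next
    case False
    then have "alpha j - alpha i \<in> Rp" using dR R_Rp_Rm Rm_iff_uminus_Rp by fastforce
    then obtain r where r: "\<forall>l. 0 \<le> r l" "alpha j - alpha i = (\<Sum>l\<in>{Suc 0..DIM('a)}. r l *\<^sub>R alpha l)"
      using Rp_pos_cone[OF \<open>alpha j - alpha i \<in> Rp\<close>] unfolding pos_cone_def by blast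
    have "alpha j - alpha i = (\<Sum>l\<in>{Suc 0..DIM('a)}. (- e l) *\<^sub>R alpha l)"
      using arg_cong[OF de, of uminus] by (simp add: sum_negf)
    then have "r i = - e i" using simple_coeff_eq[of r "\<lambda>l. - e l" i] r(2) i by simp
    then show False using r(1)[rule_format, of i] ne by (simp add: e_def)
  qed
qed


subsection \<open>The highest coroot\<close>

definition coheight :: "'a \<Rightarrow> real" where "coheight a = coroot a \<bullet> rho_vee R alpha"

lemma pos_cone_rho_vee_pos: assumes x: "x \<in> pos_cone" "x \<noteq> 0" shows "0 < x \<bullet> rho_vee R alpha"
proof -
  obtain r where r: "\<forall>j. 0 \<le> r j" "x = (\<Sum>j\<in>{Suc 0..DIM('a)}. r j *\<^sub>R alpha j)"
    using x(1) pos_cone_def by auto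
  have e: "x \<bullet> rho_vee R alpha = (\<Sum>j\<in>{Suc 0..DIM('a)}. r j)"
    using r(2) inner_simple_rho_vee by (simp add: inner_sum_left)
  have nn: "0 \<le> (\<Sum>j\<in>{Suc 0..DIM('a)}. r j)" using r(1) by (simp add: sum_nonneg)
  have "(\<Sum>j\<in>{Suc 0..DIM('a)}. r j) \<noteq> 0"
  proof
    assume "(\<Sum>j\<in>{Suc 0..DIM('a)}. r j) = 0"
    then have "\<forall>j\<in>{Suc 0..DIM('a)}. r j = 0" using r(1) sum_nonneg_eq_0_iff[of "{Suc 0..DIM('a)}" r]
      by auto
    then show False using r(2) x(2) by simp
  qed
  then show ?thesis using e nn by simp
qed

lemma coheight_less: "coroot b - coroot a \<in> pos_cone \<Longrightarrow> coroot b \<noteq> coroot a \<Longrightarrow>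
    coheight a < coheight b"
  using pos_cone_rho_vee_pos[of "coroot b - coroot a"] by (simp add: coheight_def inner_diff_left)

lemma rrefl_simple_raise:
  assumes c: "c \<in> Rp" and k: "k \<in> {Suc 0..DIM('a)}" and neg: "c \<bullet> alpha k < 0"
  shows "rrefl (alpha k) c \<in> Rp \<and> coroot (rrefl (alpha k) c) - coroot c \<in> pos_cone \<and> coroot (rrefl (alpha k) c) \<noteq> coroot c"
proof -
  let ?t = "- (alpha k \<bullet> coroot c)"
  have cc: "c \<bullet> c > 0" using c Rp_root zero_notin_R by auto
  have t: "0 < ?t"
  proof -
    have "alpha k \<bullet> coroot c = 2 * (c \<bullet> alpha k) / (c \<bullet> c)" by (simp add: coroot_def inner_commute)
    moreover have "2 * (c \<bullet> alpha k) / (c \<bullet> c) < 0" using neg cc by (simp add: divide_neg_pos)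
    ultimately show ?thesis by simp
  qed
  have e: "coroot (rrefl (alpha k) c) - coroot c = ?t *\<^sub>R coroot (alpha k)"
    using coroot_rrefl[OF simple_nonzero[OF k], of c] by simp
  have d: "?t *\<^sub>R coroot (alpha k) \<in> pos_cone" using t pos_cone_simple[OF k]
    by (intro pos_cone_scaleR) (auto simp: coroot_pos_cone_iff)
  have nz': "?t *\<^sub>R coroot (alpha k) \<noteq> 0" using t coroot_nonzero[OF simple_nonzero[OF k]] by simp
  have eq: "coroot (rrefl (alpha k) c) = coroot c + ?t *\<^sub>R coroot (alpha k)"
    using coroot_rrefl[OF simple_nonzero[OF k], of c] by simp
  have "coroot c + ?t *\<^sub>R coroot (alpha k) \<in> pos_cone"
    using pos_cone_add[OF iffD2[OF coroot_pos_cone_iff Rp_pos_cone[OF c]] d] .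
  then have "coroot (rrefl (alpha k) c) \<in> pos_cone" using eq by metis
  then have "rrefl (alpha k) c \<in> Rp"
    using root_pos_cone_Rp coroot_pos_cone_iff rrefl_root[OF simple_root[OF k] Rp_root[OF c]]
      by blast
  moreover have "coroot (rrefl (alpha k) c) \<noteq> coroot c"
  proof
    assume "coroot (rrefl (alpha k) c) = coroot c"
    then have "?t *\<^sub>R coroot (alpha k) = 0" using e by simp
    then show False using nz' by simp
  qed
  ultimately show ?thesis using e d by simp
qed

lemma coroot_Rp_int_comb: "a \<in> Rp \<Longrightarrow>
    \<exists>z::nat\<Rightarrow>int. coroot a = (\<Sum>j\<in>{Suc 0..DIM('a)}. of_int (z j) *\<^sub>R coroot (alpha j))"
proof (induction rule: height_induct)
  case (simple k)
  show ?case
    by (rule exI[of _ "\<lambda>j. if j = k then 1 else 0"])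
       (simp add: sum_delta_scaleR[OF finite_atLeastAtMost simple, of 1 "\<lambda>j. coroot (alpha j)", simplified] if_distrib[of of_int] cong: if_cong)
next
  case (step a k)
  let ?b = "rrefl (alpha k) a"
  obtain z where z: "coroot ?b = (\<Sum>j\<in>{Suc 0..DIM('a)}. of_int (z j) *\<^sub>R coroot (alpha j))"
    using step by blast
  have ba: "rrefl (alpha k) ?b = a" using simple_nonzero[OF step(2)] by (simp add: rrefl_rrefl)
  obtain t where t: "alpha k \<bullet> coroot ?b = of_int t"
    using root_pairing_int[OF rrefl_root[OF simple_root[OF step(2)] Rp_root[OF step(1)]] simple_root[OF step(2)]] Ints_cases by blast
  have "coroot a = coroot ?b - (alpha k \<bullet> coroot ?b) *\<^sub>R coroot (alpha k)"
    using coroot_rrefl[OF simple_nonzero[OF step(2)], of ?b] ba by simp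
  also have "\<dots> = (\<Sum>j\<in>{Suc 0..DIM('a)}. of_int (z j - (if j = k then t else 0)) *\<^sub>R coroot (alpha j))"
    using z t sum_delta_scaleR[OF finite_atLeastAtMost step(2), of "of_int t" "\<lambda>j. coroot (alpha j)"]
    by (simp add: scaleR_diff_left sum_subtractf if_distrib[of of_int] cong: if_cong)
  finally show ?case by (intro exI[of _ "\<lambda>j. z j - (if j = k then t else 0)"])
qed

lemma coroot_int_comb: "a \<in> R \<Longrightarrow>
    \<exists>z::nat\<Rightarrow>int. coroot a = (\<Sum>j\<in>{Suc 0..DIM('a)}. of_int (z j) *\<^sub>R coroot (alpha j))"
proof -
  assume a: "a \<in> R"
  show ?thesis
  proof (cases "a \<in> Rp")
    case True then show ?thesis using coroot_Rp_int_comb by blast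
  next
    case False
    then have "-a \<in> Rp" using a R_Rp_Rm Rm_iff_uminus_Rp by blast
    then obtain z where z: "coroot (-a) = (\<Sum>j\<in>{Suc 0..DIM('a)}. of_int (z j) *\<^sub>R coroot (alpha j))"
      using coroot_Rp_int_comb by blast
    have "coroot a = - coroot (-a)" by (simp add: coroot_uminus)
    also have "\<dots> = (\<Sum>j\<in>{Suc 0..DIM('a)}. of_int (- z j) *\<^sub>R coroot (alpha j))"
      using z by (simp add: sum_negf)
    finally have "coroot a = (\<Sum>j\<in>{Suc 0..DIM('a)}. of_int (- z j) *\<^sub>R coroot (alpha j))" .
    then show ?thesis by (intro exI[of _ "\<lambda>j. - z j"])
  qed
qed

lemma span_orthogonal:
  assumes "\<And>x y. x \<in> S \<Longrightarrow> y \<in> T \<Longrightarrow> x \<bullet> y = 0" and "x \<in> span S" and "y \<in> span T"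
  shows "x \<bullet> y = 0"
proof -
  have "orthogonal x' y" if "x' \<in> S" for x'
    using orthogonal_to_span[OF assms(3)] assms(1) that by (simp add: orthogonal_def)
  then have "orthogonal y x" using orthogonal_to_span[OF assms(2)] orthogonal_commute by blast
  then show ?thesis by (simp add: orthogonal_def inner_commute)
qed

text \<open>Irreducibility, read off on the base: the simple roots cannot be split into two
  nonempty mutually orthogonal families, since every root lies in the span of one of them.\<close>

lemma Rp_in_orthogonal_spans:
  assumes J: "J \<subseteq> {Suc 0..DIM('a)}"
    and orth: "\<And>i j. i \<in> J \<Longrightarrow> j \<in> {Suc 0..DIM('a)} - J \<Longrightarrow> alpha i \<bullet> alpha j = 0"
    and c: "c \<in> Rp"
  shows "c \<in> span (alpha ` J) \<or> c \<in> span (alpha ` ({Suc 0..DIM('a)} - J))"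
proof -
  define V1 where "V1 = span (alpha ` J)"
  define V2 where "V2 = span (alpha ` ({Suc 0..DIM('a)} - J))"
  have orthV: "x \<bullet> y = 0" if "x \<in> V1" "y \<in> V2" for x y
    using span_orthogonal[of "alpha ` J" "alpha ` ({Suc 0..DIM('a)} - J)"] orth that
    unfolding V1_def V2_def by blast
  have V1: "alpha k \<in> V1" if "k \<in> J" for k
    using that by (simp add: V1_def span_base)
  have V2: "alpha k \<in> V2" if "k \<in> {Suc 0..DIM('a)}" "k \<notin> J" for k
    using that by (simp add: V2_def span_base)
  have "c \<in> V1 \<or> c \<in> V2"
    using c
  proof (induction rule: height_induct)
    case (simple k)
    then show ?case using V1 V2 by blast
  next
    case (step c k)
    let ?b = "rrefl (alpha k) c"
    let ?t = "?b \<bullet> coroot (alpha k)"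
    have c_eq: "c = ?b - ?t *\<^sub>R alpha k"
      using simple_nonzero[OF step(2)] by (metis rrefl_def rrefl_rrefl)
    show ?case
    proof (cases "k \<in> J")
      case True
      show ?thesis
      proof (cases "?b \<in> V1")
        case True
        then have "?b - ?t *\<^sub>R alpha k \<in> V1"
          using V1[OF \<open>k \<in> J\<close>] unfolding V1_def by (intro span_diff span_scale)
        then show ?thesis using c_eq by simp
      next
        case False
        then have "?b \<in> V2" using step.IH by blast
        then have "alpha k \<bullet> ?b = 0" using orthV[OF V1[OF True]] by blast
        then have "?t = 0" by (simp add: coroot_def inner_commute)
        then show ?thesis using c_eq \<open>?b \<in> V2\<close> by simp
      qed
    next
      case False
      show ?thesis
      proof (cases "?b \<in> V2")
        case True
        then have "?b - ?t *\<^sub>R alpha k \<in> V2"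
          using V2[OF step(2) \<open>k \<notin> J\<close>] unfolding V2_def by (intro span_diff span_scale)
        then show ?thesis using c_eq by simp
      next
        case False
        then have "?b \<in> V1" using step.IH by blast
        then have "?t = 0" using orthV[OF _ V2[OF step(2) \<open>k \<notin> J\<close>]] by (simp add: coroot_def)
        then show ?thesis using c_eq \<open>?b \<in> V1\<close> by simp
      qed
    qed
  qed
  then show ?thesis unfolding V1_def V2_def .
qed

lemma simple_orthogonal_split_trivial:
  assumes J: "J \<subseteq> {Suc 0..DIM('a)}" "J \<noteq> {}"
    and orth: "\<And>i j. i \<in> J \<Longrightarrow> j \<in> {Suc 0..DIM('a)} - J \<Longrightarrow> alpha i \<bullet> alpha j = 0"
  shows "J = {Suc 0..DIM('a)}"
proof (rule ccontr)
  assume "J \<noteq> {Suc 0..DIM('a)}"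
  then obtain j0 where j0: "j0 \<in> {Suc 0..DIM('a)} - J" using J(1) by blast
  define V1 where "V1 = span (alpha ` J)"
  define V2 where "V2 = span (alpha ` ({Suc 0..DIM('a)} - J))"
  have orthV: "x \<bullet> y = 0" if "x \<in> V1" "y \<in> V2" for x y
    using span_orthogonal[of "alpha ` J" "alpha ` ({Suc 0..DIM('a)} - J)"] orth that
    unfolding V1_def V2_def by blast
  have V1: "alpha k \<in> V1" if "k \<in> J" for k
    using that by (simp add: V1_def span_base)
  have pos_V: "c \<in> V1 \<or> c \<in> V2" if "c \<in> Rp" for c
    using Rp_in_orthogonal_spans[OF J(1) orth that] unfolding V1_def V2_def .
  have roots_V: "c \<in> V1 \<or> c \<in> V2" if "c \<in> R" for c
  proof (cases "c \<in> Rp")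
    case False
    then have "- c \<in> V1 \<or> - c \<in> V2"
      using that R_Rp_Rm Rm_iff_uminus_Rp pos_V by blast
    then show ?thesis unfolding V1_def V2_def using span_neg by force
  qed (use pos_V in blast)
  have "alpha j0 \<notin> V1"
  proof
    assume "alpha j0 \<in> V1"
    moreover have "alpha ` J \<subseteq> alpha ` {Suc 0..DIM('a)} - {alpha j0}"
      using J(1) j0 simple_inj by (auto dest: inj_onD)
    ultimately have "alpha j0 \<in> span (alpha ` {Suc 0..DIM('a)} - {alpha j0})"
      unfolding V1_def using span_mono by blast
    then show False using simple_independent j0 by (auto simp: dependent_def)
  qed
  moreover obtain i where "i \<in> J" using J(2) by blast
  ultimately show False
  proof (intro root_system_irreducible[of "R \<inter> V1" "R - V1"])
    show "R \<inter> V1 \<noteq> {}" using simple_root V1 \<open>i \<in> J\<close> J(1) by blast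
    show "R - V1 \<noteq> {}" using simple_root j0 \<open>alpha j0 \<notin> V1\<close> by blast
    show "\<forall>a\<in>R \<inter> V1. \<forall>b\<in>R - V1. a \<bullet> b = 0" using roots_V orthV by blast
  qed blast
qed

lemma highest_support_orthogonal:
  assumes a: "a \<in> Rp" and dom: "\<forall>k\<in>{Suc 0..DIM('a)}. 0 \<le> a \<bullet> alpha k"
    and d: "\<forall>j. 0 \<le> d j" "coroot a = (\<Sum>j\<in>{Suc 0..DIM('a)}. d j *\<^sub>R coroot (alpha j))"
    and i: "i \<in> {Suc 0..DIM('a)}" "0 < d i" and j: "j \<in> {Suc 0..DIM('a)}" "d j = 0"
  shows "alpha i \<bullet> alpha j = 0"
proof -
  have terms: "d l * (coroot (alpha l) \<bullet> alpha j) \<le> 0" if l: "l \<in> {Suc 0..DIM('a)}" for l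
  proof (cases "l = j")
    case True
    then show ?thesis using j(2) by simp
  next
    case False
    have "alpha l \<bullet> alpha j \<le> 0" using simple_inner_nonpos[OF l j(1) False] .
    moreover have "0 < alpha l \<bullet> alpha l" using simple_nonzero[OF l] by simp
    ultimately have "coroot (alpha l) \<bullet> alpha j \<le> 0" by (simp add: coroot_def divide_nonpos_pos)
    then show ?thesis using d(1) by (simp add: mult_nonneg_nonpos)
  qed
  have "(\<Sum>l\<in>{Suc 0..DIM('a)}. d l * (coroot (alpha l) \<bullet> alpha j)) = coroot a \<bullet> alpha j"
    using d(2) by (simp add: inner_sum_left)
  moreover have "0 \<le> coroot a \<bullet> alpha j" using dom j(1) by (simp add: coroot_def)
  ultimately have "(\<Sum>l\<in>{Suc 0..DIM('a)}. - (d l * (coroot (alpha l) \<bullet> alpha j))) = 0"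
    using terms sum_nonpos[of "{Suc 0..DIM('a)}" "\<lambda>l. d l * (coroot (alpha l) \<bullet> alpha j)"]
    by (simp add: sum_negf)
  then have "d i * (coroot (alpha i) \<bullet> alpha j) = 0"
    using terms i(1) sum_nonneg_eq_0_iff[of "{Suc 0..DIM('a)}" "\<lambda>l. - (d l * (coroot (alpha l) \<bullet> alpha j))"]
    by simp
  then show ?thesis using i(2) simple_nonzero[OF i(1)] by (simp add: coroot_def)
qed

lemma highest_full_support:
  assumes a: "a \<in> Rp" and dom: "\<forall>k\<in>{Suc 0..DIM('a)}. 0 \<le> a \<bullet> alpha k"
    and d: "\<forall>j. 0 \<le> d j" "coroot a = (\<Sum>j\<in>{Suc 0..DIM('a)}. d j *\<^sub>R coroot (alpha j))"
  shows "\<forall>j\<in>{Suc 0..DIM('a)}. 0 < d j"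
proof -
  define J where "J = {j \<in> {Suc 0..DIM('a)}. 0 < d j}"
  have "J \<noteq> {}"
  proof
    assume "J = {}"
    then have "\<forall>j\<in>{Suc 0..DIM('a)}. d j = 0" using d(1) by (auto simp: J_def less_eq_real_def)
    then have "coroot a = 0" using d(2) by simp
    then show False using coroot_nonzero Rp_root[OF a] root_nonzero by blast
  qed
  moreover have "alpha i \<bullet> alpha j = 0" if "i \<in> J" "j \<in> {Suc 0..DIM('a)} - J" for i j
    using highest_support_orthogonal[OF a dom d, of i j] that d(1)
      by (auto simp: J_def less_eq_real_def)
  ultimately have "J = {Suc 0..DIM('a)}"
    by (intro simple_orthogonal_split_trivial) (auto simp: J_def)
  then show ?thesis unfolding J_def by blast
qed

lemma Rp_nonempty: "Rp \<noteq> {}"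
proof -
  have "1 \<in> {Suc 0..DIM('a)}" using DIM_positive[where 'a='a] by simp
  then show ?thesis using simple_Rp by blast
qed

lemma dominant_if_coheight_max:
  assumes S: "S \<subseteq> Rp" "c \<in> S"
    and closed: "\<And>c k. c \<in> S \<Longrightarrow> k \<in> {Suc 0..DIM('a)} \<Longrightarrow> c \<bullet> alpha k < 0 \<Longrightarrow> rrefl (alpha k) c \<in> S"
    and max: "\<And>e. e \<in> S \<Longrightarrow> coheight e \<le> coheight c"
  shows "\<forall>k\<in>{Suc 0..DIM('a)}. 0 \<le> c \<bullet> alpha k"
proof (rule ccontr)
  assume "\<not> ?thesis"
  then obtain k where k: "k \<in> {Suc 0..DIM('a)}" "c \<bullet> alpha k < 0" by (auto simp: not_le)
  have "coheight c < coheight (rrefl (alpha k) c)"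
    using rrefl_simple_raise[OF _ k] S coheight_less by blast
  then show False using max[OF closed[OF S(2) k]] by simp
qed

lemma inner_pos_if_full_support:
  assumes d: "\<forall>j\<in>{Suc 0..DIM('a)}. 0 < d j" "coroot a = (\<Sum>j\<in>{Suc 0..DIM('a)}. d j *\<^sub>R coroot (alpha j))"
    and a: "a \<in> Rp" and c: "c \<in> Rp" and dom: "\<forall>k\<in>{Suc 0..DIM('a)}. 0 \<le> c \<bullet> alpha k"
  shows "0 < a \<bullet> c"
proof -
  obtain k where k: "k \<in> {Suc 0..DIM('a)}" "0 < c \<bullet> alpha k" using Rp_ex_simple_acute[OF c] by blast
  have "0 < (\<Sum>j\<in>{Suc 0..DIM('a)}. d j * (coroot (alpha j) \<bullet> c))"
  proof (rule sum_pos2[OF finite_atLeastAtMost k(1)])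
    show "0 < d k * (coroot (alpha k) \<bullet> c)"
      using d(1) k simple_nonzero[OF k(1)] by (simp add: coroot_def inner_commute)
    show "\<And>j. j \<in> {Suc 0..DIM('a)} \<Longrightarrow> 0 \<le> d j * (coroot (alpha j) \<bullet> c)"
      using d(1) dom simple_nonzero by (simp add: coroot_def inner_commute less_imp_le)
  qed
  also have "\<dots> = coroot a \<bullet> c" using d(2) by (simp add: inner_sum_left)
  finally have "0 < (2 / (a \<bullet> a)) * (a \<bullet> c)" by (simp add: coroot_def)
  moreover have "0 < a \<bullet> a" using root_nonzero[OF Rp_root[OF a]] by simp
  ultimately show ?thesis by (simp add: zero_less_mult_iff zero_less_divide_iff)
qed

lemma ex_highest_coroot: "\<exists>a\<in>Rp. \<forall>b\<in>Rp. coroot a - coroot b \<in> pos_cone"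
proof -
  obtain a where a: "a \<in> Rp" "\<forall>b\<in>Rp. coheight b \<le> coheight a"
    using finite_ex_max[OF finite_Rp Rp_nonempty] by blast
  have "\<forall>k\<in>{Suc 0..DIM('a)}. 0 \<le> a \<bullet> alpha k"
    using a rrefl_simple_raise by (intro dominant_if_coheight_max[of Rp]) auto
  moreover obtain d where d: "\<forall>j. 0 \<le> d j" "coroot a = (\<Sum>j\<in>{Suc 0..DIM('a)}. d j *\<^sub>R coroot (alpha j))"
    using coroot_Rp_nonneg_comb[OF a(1)] by blast
  ultimately have full: "\<forall>j\<in>{Suc 0..DIM('a)}. 0 < d j" using highest_full_support[OF a(1)] by blast
  have "coroot a - coroot b \<in> pos_cone" if b: "b \<in> Rp" for b
  proof -
    define S where "S = {c \<in> Rp. coroot c - coroot b \<in> pos_cone}"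
    have "b \<in> S" using b pos_cone_zero by (simp add: S_def)
    moreover have "finite S" using finite_Rp by (simp add: S_def)
    ultimately obtain c where c: "c \<in> S" "\<forall>e\<in>S. coheight e \<le> coheight c"
      using finite_ex_max[of S coheight] by blast
    have cRp: "c \<in> Rp" and cb: "coroot c - coroot b \<in> pos_cone" using c(1) by (auto simp: S_def)
    have "rrefl (alpha k) e \<in> S" if "e \<in> S" "k \<in> {Suc 0..DIM('a)}" "e \<bullet> alpha k < 0" for e k
    proof -
      have "rrefl (alpha k) e \<in> Rp" "coroot (rrefl (alpha k) e) - coroot e \<in> pos_cone"
        using rrefl_simple_raise[of e k] that by (auto simp: S_def)
      moreover have "coroot e - coroot b \<in> pos_cone" using that(1) by (simp add: S_def)
      ultimately show ?thesis using pos_cone_add by (fastforce simp: S_def)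
    qed
    then have "\<forall>k\<in>{Suc 0..DIM('a)}. 0 \<le> c \<bullet> alpha k"
      using c by (intro dominant_if_coheight_max[of S]) (auto simp: S_def)
    then have ac: "0 < a \<bullet> c" using inner_pos_if_full_support[OF full d(2) a(1) cRp] by blast
    show ?thesis
    proof (cases "a = c")
      case True
      then show ?thesis using cb by simp
    next
      case False
      obtain e where e: "e \<in> R" "coroot a - coroot c = coroot e"
        using diff_coroot_acute_roots[OF Rp_root[OF a(1)] Rp_root[OF cRp] ac False] by blast
      show ?thesis
      proof (cases "e \<in> Rp")
        case True
        have "coroot a - coroot b = coroot e + (coroot c - coroot b)" using e
          by (simp add: algebra_simps)
        then show ?thesis
          using pos_cone_add[OF iffD2[OF coroot_pos_cone_iff Rp_pos_cone[OF True]] cb]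
            by (simp add: algebra_simps)
      next
        case False
        then have "- e \<in> Rp" using e R_Rp_Rm Rm_iff_uminus_Rp by blast
        then have "coroot c - coroot a \<in> pos_cone" using e(2) Rp_pos_cone coroot_pos_cone_iff
          by (metis coroot_uminus minus_diff_eq)
        moreover have "coroot c \<noteq> coroot a"
          using coroot_inject \<open>a \<noteq> c\<close> root_nonzero Rp_root a(1) cRp by metis
        ultimately have "coheight a < coheight c" using coheight_less by blast
        then show ?thesis using a(2) cRp by fastforce
      qed
    qed
  qed
  then show ?thesis using a(1) by blast
qed

lemma nonneg_int_comb_pos_cone: "x \<in> nonneg_int_comb (\<lambda>j. coroot (alpha j)) \<Longrightarrow> x \<in> pos_cone"
proof -
  assume "x \<in> nonneg_int_comb (\<lambda>j. coroot (alpha j))"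
  then obtain c :: "nat \<Rightarrow> int" where c: "\<forall>j. 0 \<le> c j" "x = (\<Sum>j\<in>{Suc 0..DIM('a)}. of_int (c j) *\<^sub>R coroot (alpha j))"
    by (auto simp: nonneg_int_comb_def)
  have "(\<Sum>j\<in>{Suc 0..DIM('a)}. of_int (c j) *\<^sub>R coroot (alpha j)) \<in> pos_cone"
    using c(1) pos_cone_simple by (intro pos_cone_sum) (auto simp: coroot_pos_cone_iff)
  then show ?thesis using c(2) by simp
qed

lemma pos_cone_int_comb:
  assumes x: "x \<in> pos_cone" and z: "x = (\<Sum>j\<in>{Suc 0..DIM('a)}. of_int (z j) *\<^sub>R coroot (alpha j))"
  shows "x \<in> nonneg_int_comb (\<lambda>j. coroot (alpha j))"
proof -
  obtain r where r: "\<forall>j. 0 \<le> r j" "x = (\<Sum>j\<in>{Suc 0..DIM('a)}. r j *\<^sub>R alpha j)" using x pos_cone_def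
    by auto
  have x2: "x = (\<Sum>j\<in>{Suc 0..DIM('a)}. (of_int (z j) * (2 / (alpha j \<bullet> alpha j))) *\<^sub>R alpha j)"
    using z by (simp add: coroot_def)
  have zn: "0 \<le> z j" if j: "j \<in> {Suc 0..DIM('a)}" for j
  proof -
    have rj: "r j = of_int (z j) * (2 / (alpha j \<bullet> alpha j))" using simple_coeff_eq[OF _ j] r(2) x2
      by metis
    have pos: "0 < 2 / (alpha j \<bullet> alpha j)" using simple_nonzero[OF j] by simp
    have h1: "0 \<le> of_int (z j) * (2 / (alpha j \<bullet> alpha j))" using r(1) rj by metis
    show ?thesis
    proof (rule ccontr)
      assume "\<not> 0 \<le> z j"
      then have "(of_int (z j)::real) < 0" by simp
      then have "of_int (z j) * (2 / (alpha j \<bullet> alpha j)) < 0" using pos by (rule mult_neg_pos)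
      then show False using h1 by linarith
    qed
  qed
  define c where "c j = (if j \<in> {Suc 0..DIM('a)} then z j else 0)" for j
  have "x = (\<Sum>j\<in>{Suc 0..DIM('a)}. of_int (c j) *\<^sub>R coroot (alpha j))" using z by (simp add: c_def)
  moreover have "\<forall>j. 0 \<le> c j" using zn by (simp add: c_def)
  ultimately show ?thesis unfolding nonneg_int_comb_def by auto
qed

lemma alpha0_ex1: "\<exists>!a. a \<in> Rp \<and> (\<forall>b\<in>Rp. coroot a - coroot b \<in> nonneg_int_comb (\<lambda>j. coroot (alpha j)))"
proof -
  obtain a where a: "a \<in> Rp" "\<forall>b\<in>Rp. coroot a - coroot b \<in> pos_cone" using ex_highest_coroot
    by blast
  have P: "\<forall>b\<in>Rp. coroot a - coroot b \<in> nonneg_int_comb (\<lambda>j. coroot (alpha j))"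
  proof
    fix b assume b: "b \<in> Rp"
    obtain za where za: "coroot a = (\<Sum>j\<in>{Suc 0..DIM('a)}. of_int (za j) *\<^sub>R coroot (alpha j))"
      using coroot_int_comb[OF Rp_root[OF a(1)]] by blast
    obtain zb where zb: "coroot b = (\<Sum>j\<in>{Suc 0..DIM('a)}. of_int (zb j) *\<^sub>R coroot (alpha j))"
      using coroot_int_comb[OF Rp_root[OF b]] by blast
    have "coroot a - coroot b = (\<Sum>j\<in>{Suc 0..DIM('a)}. of_int (za j - zb j) *\<^sub>R coroot (alpha j))"
      using za zb by (simp add: scaleR_diff_left sum_subtractf)
    then show "coroot a - coroot b \<in> nonneg_int_comb (\<lambda>j. coroot (alpha j))"
      by (rule pos_cone_int_comb[OF a(2)[rule_format, OF b]])
  qed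
  show ?thesis
  proof (rule ex1I[of _ a])
    show "a \<in> Rp \<and> (\<forall>b\<in>Rp. coroot a - coroot b \<in> nonneg_int_comb (\<lambda>j. coroot (alpha j)))"
      using a(1) P by blast
  next
    fix a' assume a': "a' \<in> Rp \<and> (\<forall>b\<in>Rp. coroot a' - coroot b \<in> nonneg_int_comb (\<lambda>j. coroot (alpha j)))"
    have h1: "coroot a' - coroot a \<in> pos_cone"
      using nonneg_int_comb_pos_cone a'[THEN conjunct2, rule_format, OF a(1)] by blast
    have h2: "- (coroot a' - coroot a) \<in> pos_cone" using a(2)[rule_format, of a'] a' by simp
    have "coroot a' - coroot a = 0" using pos_cone_pointed[OF h1 h2] .
    then have "coroot a' = coroot a" by simp
    then show "a' = a" using coroot_inject[OF root_nonzero[OF Rp_root[OF conjunct1[OF a']]] root_nonzero[OF Rp_root[OF a(1)]]] by blast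
  qed
qed

lemma alpha0_Rp: "alpha0 R alpha \<in> Rp"
  and alpha0_highest: "b \<in> Rp \<Longrightarrow> coroot (alpha0 R alpha) - coroot b \<in> pos_cone"
proof -
  have H: "alpha0 R alpha \<in> Rp \<and> (\<forall>b\<in>Rp. coroot (alpha0 R alpha) - coroot b \<in> nonneg_int_comb (\<lambda>j. coroot (alpha j)))"
    unfolding alpha0_def by (rule theI'[OF alpha0_ex1])
  from H show "alpha0 R alpha \<in> Rp" by blast
  from H show "b \<in> Rp \<Longrightarrow> coroot (alpha0 R alpha) - coroot b \<in> pos_cone"
    using nonneg_int_comb_pos_cone by blast
qed


lemma alpha0_pairing_le1:
  assumes dom0: "alpha0 R alpha \<in> dominant R alpha" and b: "b \<in> Rp" "b \<noteq> alpha0 R alpha"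
  shows "alpha0 R alpha \<bullet> coroot b \<le> 1"
proof (rule ccontr)
  let ?a = "alpha0 R alpha"
  let ?t = "?a \<bullet> coroot b"
  assume "\<not> ?thesis"
  then have t1: "1 < ?t" by simp
  have aR: "?a \<in> R" using Rp_root alpha0_Rp by blast
  have bR: "b \<in> R" using Rp_root b(1) by blast
  have tI: "?t \<in> \<int>" using root_pairing_int[OF bR aR] .
  have t2: "2 \<le> ?t"
  proof -
    obtain z where z: "?t = of_int z" using tI Ints_cases by blast
    then have "1 < z" using t1 by simp
    then have "2 \<le> z" by simp
    then show ?thesis using z by simp
  qed
  let ?e = "- rrefl ?a b"
  have eR: "?e \<in> R" using uminus_root rrefl_root[OF aR bR] by blast
  have ce: "coroot ?e = ?t *\<^sub>R coroot ?a - coroot b"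
    using coroot_rrefl[OF root_nonzero[OF aR], of b] by (simp add: coroot_uminus)
  have hi: "coroot ?a - coroot b \<in> pos_cone" using alpha0_highest[OF b(1)] .
  have ca: "coroot ?a \<in> pos_cone" using Rp_pos_cone[OF alpha0_Rp] coroot_pos_cone_iff by blast
  have "coroot ?e = (?t - 1) *\<^sub>R coroot ?a + (coroot ?a - coroot b)"
    using ce by (simp add: algebra_simps)
  also have "\<dots> \<in> pos_cone" using pos_cone_add[OF pos_cone_scaleR[OF ca] hi] t1 by simp
  finally have "?e \<in> Rp" using eR root_pos_cone_Rp coroot_pos_cone_iff by blast
  then have hi2: "coroot ?a - coroot ?e \<in> pos_cone" using alpha0_highest by blast
  have "coroot ?a - coroot ?e = coroot b - (?t - 1) *\<^sub>R coroot ?a"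
    using ce by (simp add: algebra_simps)
  then have hi3: "coroot b - (?t - 1) *\<^sub>R coroot ?a \<in> pos_cone" using hi2 by simp
  have "(coroot ?a - coroot b) + (coroot b - (?t - 1) *\<^sub>R coroot ?a) = (2 - ?t) *\<^sub>R coroot ?a"
    by (simp add: algebra_simps scaleR_2)
  then have sC: "(2 - ?t) *\<^sub>R coroot ?a \<in> pos_cone" using pos_cone_add[OF hi hi3] by simp
  have cnz: "coroot ?a \<noteq> 0" using coroot_nonzero root_nonzero[OF aR] by blast
  show False
  proof (cases "?t = 2")
    case True
    then have "coroot b - coroot ?a \<in> pos_cone" using hi3 by simp
    then have "coroot ?a - coroot b = 0" using pos_cone_pointed[OF hi] by simp
    then have "coroot ?a = coroot b" by simp
    then show False using coroot_inject root_nonzero aR bR b(2) by metis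
  next
    case False
    then have gt: "0 < ?t - 2" using t2 by simp
    have "- ((2 - ?t) *\<^sub>R coroot ?a) \<in> pos_cone" using pos_cone_scaleR[OF ca, of "?t - 2"] gt
      by (simp add: algebra_simps)
    then have "(2 - ?t) *\<^sub>R coroot ?a = 0" using pos_cone_pointed[OF sC] by simp
    then show False using cnz False by simp
  qed
qed

lemma orbit_pairing_small:
  assumes om: "\<forall>c\<in>Rp. c \<noteq> om \<longrightarrow> 0 \<le> om \<bullet> coroot c \<and> om \<bullet> coroot c \<le> 1"
    and y: "y \<in> W0 R" and b: "b \<in> R" "b \<noteq> y om" "b \<noteq> - y om"
  shows "\<bar>y om \<bullet> coroot b\<bar> \<le> 1"
proof -
  let ?c = "inv y b"
  have cR: "?c \<in> R" using W0_root[OF W0_inv[OF y] b(1)] .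
  have e: "y om \<bullet> coroot b = om \<bullet> coroot ?c" using W0_inner_coroot_inv[OF y] .
  have c1: "?c \<noteq> om" using b(2) W0_apply_inv[OF y, of b] by metis
  have c2: "-?c \<noteq> om"
  proof
    assume "-?c = om"
    then have "y (-?c) = y om" by simp
    then have "- b = y om" using W0_uminus[OF y] W0_apply_inv[OF y, of b] by simp
    then show False using b(3) by (metis minus_minus)
  qed
  show ?thesis
  proof (cases "?c \<in> Rp")
    case True then show ?thesis using om c1 e by fastforce
  next
    case False
    then have "-?c \<in> Rp" using cR R_Rp_Rm Rm_iff_uminus_Rp by blast
    then have "0 \<le> om \<bullet> coroot (-?c) \<and> om \<bullet> coroot (-?c) \<le> 1" using om c2 by blast
    then show ?thesis using e by (simp add: coroot_uminus)
  qed
qed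

lemma orbit_pairing_small_all:
  assumes om: "\<forall>c\<in>Rp. 0 \<le> om \<bullet> coroot c \<and> om \<bullet> coroot c \<le> 1"
    and y: "y \<in> W0 R" and b: "b \<in> R"
  shows "\<bar>y om \<bullet> coroot b\<bar> \<le> 1"
proof -
  let ?c = "inv y b"
  have cR: "?c \<in> R" using W0_root[OF W0_inv[OF y] b(1)] .
  have e: "y om \<bullet> coroot b = om \<bullet> coroot ?c" using W0_inner_coroot_inv[OF y] .
  show ?thesis
  proof (cases "?c \<in> Rp")
    case True then show ?thesis using om e by fastforce
  next
    case False
    then have "-?c \<in> Rp" using cR R_Rp_Rm Rm_iff_uminus_Rp by blast
    then have "0 \<le> om \<bullet> coroot (-?c) \<and> om \<bullet> coroot (-?c) \<le> 1" using om by blast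
    then show ?thesis using e by (simp add: coroot_uminus)
  qed
qed

subsection \<open>The affine reflection \<open>s0\<close>\<close>

lemma inv_rrefl: "a \<noteq> 0 \<Longrightarrow> inv (rrefl a) = rrefl a"
  by (rule inv_unique_comp) (simp_all add: fun_eq_iff rrefl_rrefl)

lemma W0_inv_comp: "v \<in> W0 R \<Longrightarrow> w \<in> W0 R \<Longrightarrow> inv (v \<circ> w) = inv w \<circ> inv v"
  by (simp add: o_inv_distrib orthogonal_transformation_W0 orthogonal_transformation_bij)

lemma translation_Waff: "v \<in> W0 R \<Longrightarrow> m \<in> weights R \<Longrightarrow> (\<lambda>x. v x + m) \<in> Waff R"
  unfolding Waff_def by blast

lemma W0_Waff: "w \<in> W0 R \<Longrightarrow> w \<in> Waff R"
  using translation_Waff[OF _ zero_weights] by simp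

lemma s0_eq: "s0 R alpha = (\<lambda>x. rrefl (alpha0 R alpha) x + alpha0 R alpha)"
  by (rule ext) (simp add: s0_def rrefl_def algebra_simps)

lemma s0_Waff: "s0 R alpha \<in> Waff R"
  unfolding s0_eq using alpha0_Rp Rp_root rrefl_W0 root_weights by (intro translation_Waff) auto

lemma len_s0:
  assumes dom0: "alpha0 R alpha \<in> dominant R alpha"
  shows "len R alpha (s0 R alpha) = 1"
proof -
  let ?a = "alpha0 R alpha"
  have aRp: "?a \<in> Rp" using alpha0_Rp .
  have aR: "?a \<in> R" using Rp_root[OF aRp] .
  have a0: "?a \<noteq> 0" using root_nonzero[OF aR] .
  define g where "g b = nat \<bar>\<lfloor>?a \<bullet> coroot b\<rfloor> - (if rrefl ?a b \<in> Rm then 1 else 0)\<bar>" for b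
  have L: "len R alpha (s0 R alpha) = (\<Sum>b\<in>Rp. g b)"
    unfolding s0_eq g_def using len_affine[OF rrefl_W0[OF aR] root_weights[OF aR]] inv_rrefl[OF a0]
    by simp
  have "rrefl ?a ?a \<in> Rm" using a0 aRp uminus_Rp_Rm by (simp add: rrefl_self)
  then have ga: "g ?a = 1" using inner_coroot_self[OF a0] by (simp add: g_def)
  have go: "g b = 0" if b: "b \<in> Rp - {?a}" for b
  proof -
    have bRp: "b \<in> Rp" and bne: "b \<noteq> ?a" using b by auto
    have bR: "b \<in> R" using Rp_root[OF bRp] .
    have t0: "0 \<le> ?a \<bullet> coroot b" using dom0 bRp by (simp add: dominant_iff)
    have t1: "?a \<bullet> coroot b \<le> 1" using alpha0_pairing_le1[OF dom0 bRp bne] .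
    have tI: "?a \<bullet> coroot b \<in> \<int>" using root_pairing_int[OF bR aR] .
    show ?thesis
    proof (cases "?a \<bullet> coroot b = 0")
      case True
      then have "b \<bullet> coroot ?a = 0" using root_nonzero[OF bR]
        by (simp add: coroot_def inner_commute)
      then have "rrefl ?a b = b" by (simp add: rrefl_def)
      then show ?thesis using True bRp Rp_not_Rm by (simp add: g_def)
    next
      case False
      then have t: "?a \<bullet> coroot b = 1" using t0 t1 tI Ints_pos_ge1 by force
      have "coroot (- rrefl ?a b) = coroot ?a - coroot b"
        using coroot_rrefl[OF a0, of b] t by (simp add: coroot_uminus)
      then have "coroot (- rrefl ?a b) \<in> pos_cone" using alpha0_highest[OF bRp] by simp
      then have "- rrefl ?a b \<in> Rp"
        using coroot_pos_cone_iff root_pos_cone_Rp uminus_root rrefl_root[OF aR bR] by blast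
      then show ?thesis using t Rm_iff_uminus_Rp by (simp add: g_def)
    qed
  qed
  have "(\<Sum>b\<in>Rp. g b) = g ?a + (\<Sum>b\<in>Rp - {?a}. g b)" using sum.remove[OF finite_Rp aRp] by simp
  also have "\<dots> = 1" using ga go by simp
  finally show ?thesis using L by simp
qed

text \<open>An element \<open>x \<mapsto> v x + m\<close> of the affine Weyl group with \<open>v (alpha j) = - alpha0\<close> and
  \<open>m \<bullet> alpha0\<^sup>\<or> = 1\<close> maps the wall of \<open>s_j\<close> onto the wall of \<open>s_0\<close>; this is what relates \<open>q_j\<close> to \<open>q_0\<close>.\<close>

context
  fixes v j m
  assumes v: "v \<in> W0 R" and j: "j \<in> {Suc 0..DIM('a)}" and va: "v (alpha j) = - alpha0 R alpha"
    and m: "m \<in> weights R" and m1: "m \<bullet> coroot (alpha0 R alpha) = 1"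
begin

lemma translation_comp_simple_eq:
  "(\<lambda>x. v x + m) \<circ> rrefl (alpha j) = s0 R alpha \<circ> (\<lambda>x. v x + m)"
proof
  fix x
  let ?a = "alpha0 R alpha"
  have lv: "linear v" using orthogonal_transformation_W0[OF v] orthogonal_transformation_linear
    by blast
  have "coroot (- ?a) = v (coroot (alpha j))" using W0_coroot[OF v, of "alpha j"] va by simp
  then have "coroot ?a = - v (coroot (alpha j))" by (metis coroot_uminus minus_minus)
  then have c: "v x \<bullet> coroot ?a = - (x \<bullet> coroot (alpha j))" using W0_inner[OF v] by simp
  have "((\<lambda>x. v x + m) \<circ> rrefl (alpha j)) x = v x + (x \<bullet> coroot (alpha j)) *\<^sub>R ?a + m"
    using va by (simp add: rrefl_def linear_diff[OF lv] linear_scale[OF lv])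
  also have "\<dots> = (s0 R alpha \<circ> (\<lambda>x. v x + m)) x"
    using c m1 by (simp add: s0_def inner_add_left algebra_simps)
  finally show "((\<lambda>x. v x + m) \<circ> rrefl (alpha j)) x = (s0 R alpha \<circ> (\<lambda>x. v x + m)) x" .
qed

lemma len_translation_comp_simple:
  "len R alpha ((\<lambda>x. v x + m) \<circ> rrefl (alpha j)) = len R alpha (\<lambda>x. v x + m) + 1"
proof -
  let ?a = "alpha0 R alpha"
  let ?sj = "rrefl (alpha j)"
  have aRp: "?a \<in> Rp" using alpha0_Rp .
  have sjW: "?sj \<in> W0 R" using rrefl_simple_W0[OF j] .
  have inv_va: "inv v ?a = - alpha j"
    using W0_inv_apply[OF v, of "alpha j"] va W0_uminus[OF W0_inv[OF v]]
    by (metis minus_minus)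
  define f where "f c a = nat \<bar>\<lfloor>m \<bullet> coroot a\<rfloor> - (if c \<in> Rm then 1 else 0)\<bar>" for c a
  have L1: "len R alpha (\<lambda>x. v x + m) = (\<Sum>a\<in>Rp. f (inv v a) a)"
    unfolding f_def using len_affine[OF v m] .
  have "(\<lambda>x. v x + m) \<circ> ?sj = (\<lambda>x. (v \<circ> ?sj) x + m)" by (simp add: comp_def)
  then have L2: "len R alpha ((\<lambda>x. v x + m) \<circ> ?sj) = (\<Sum>a\<in>Rp. f (?sj (inv v a)) a)"
    unfolding f_def using len_affine[OF W0_comp[OF v sjW] m] W0_inv_comp[OF v sjW]
      inv_rrefl[OF simple_nonzero[OF j]] by simp
  have same: "f (?sj (inv v a)) a = f (inv v a) a" if a: "a \<in> Rp - {?a}" for a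
  proof -
    have "inv v a \<noteq> - alpha j" using a inv_va W0_apply_inv[OF v] by (metis DiffE insertI1)
    moreover have "inv v a \<noteq> alpha j"
      using a aRp uminus_Rp_Rm Rp_not_Rm va W0_apply_inv[OF v, of a] by (metis DiffE)
    moreover have "inv v a \<in> R" using W0_root[OF W0_inv[OF v] Rp_root] a by blast
    ultimately show ?thesis using rrefl_simple_Rm_iff[OF j] by (simp add: f_def)
  qed
  have fm: "\<lfloor>m \<bullet> coroot ?a\<rfloor> = 1" using m1 by simp
  have "f (inv v ?a) ?a = 0" using inv_va fm simple_Rp[OF j] uminus_Rp_Rm by (simp add: f_def)
  moreover have "f (?sj (inv v ?a)) ?a = 1"
    using inv_va fm simple_Rp[OF j] Rp_not_Rm simple_nonzero[OF j]
    by (simp add: f_def rrefl_self linear_neg[OF linear_rrefl])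
  ultimately show ?thesis
    using L1 L2 same sum.remove[OF finite_Rp aRp, of "\<lambda>a. f (inv v a) a"]
      sum.remove[OF finite_Rp aRp, of "\<lambda>a. f (?sj (inv v a)) a"] by simp
qed

end

lemma q_simple_eq_q_s0:
  assumes q_mult: "length_multiplicative R alpha q"
    and dom0: "alpha0 R alpha \<in> dominant R alpha"
    and z: "z \<in> W0 R" and j: "j \<in> {Suc 0..DIM('a)}" and za: "z (alpha0 R alpha) = alpha j"
    and m: "m \<in> weights R" and m1: "m \<bullet> coroot (alpha0 R alpha) = 1"
  shows "q (rrefl (alpha j)) = q (s0 R alpha)"
proof -
  let ?a = "alpha0 R alpha"
  let ?sj = "rrefl (alpha j)"
  have aR: "?a \<in> R" using Rp_root[OF alpha0_Rp] .
  define v where "v = rrefl ?a \<circ> inv z"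
  define U where "U = (\<lambda>x. v x + m)"
  have vW: "v \<in> W0 R" unfolding v_def using W0_comp[OF rrefl_W0[OF aR] W0_inv[OF z]] .
  have va: "v (alpha j) = - ?a"
    unfolding v_def using W0_inv_apply[OF z, of ?a] za root_nonzero[OF aR] by (simp add: rrefl_self)
  note comm = translation_comp_simple_eq[OF vW j va m m1, folded U_def]
  note len_U_sj = len_translation_comp_simple[OF vW j va m m1, folded U_def]
  have UW: "U \<in> Waff R" unfolding U_def using translation_Waff[OF vW m] .
  have len_sj: "len R alpha ?sj = 1"
    using len_W0[OF rrefl_simple_W0[OF j]] inv_set_rrefl_simple[OF j] by simp
  have qm: "\<And>v w. v \<in> Waff R \<Longrightarrow> w \<in> Waff R \<Longrightarrow> len R alpha (v \<circ> w) = len R alpha v + len R alpha w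
      \<Longrightarrow> q (v \<circ> w) = q v * q w"
    and qnz: "q U \<noteq> 0"
    using q_mult UW by (auto simp: length_multiplicative_def)
  have "q U * q ?sj = q (U \<circ> ?sj)"
    using qm[OF UW W0_Waff[OF rrefl_simple_W0[OF j]]] len_U_sj len_sj by simp
  also have "\<dots> = q (s0 R alpha) * q U"
    using comm qm[OF s0_Waff UW] len_U_sj len_s0[OF dom0] by simp
  finally show ?thesis using qnz by simp
qed

lemma wmin_characterization:
  assumes "mu \<in> weights R"
  shows "wmin R alpha mu \<in> W0 R" "wmin R alpha mu mu \<in> dominant R alpha"
    "inv_set R alpha (wmin R alpha mu) = neg_roots mu"
proof -
  obtain w where w: "w \<in> W0 R" "w mu \<in> dominant R alpha" "inv_set R alpha w \<subseteq> neg_roots mu"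
    using ex_W0_dominant_inv_set_subset[OF assms] by blast
  then have "wmin R alpha mu = w" "inv_set R alpha w = neg_roots mu" using wmin_eq by blast+
  then show "wmin R alpha mu \<in> W0 R" "wmin R alpha mu mu \<in> dominant R alpha"
    "inv_set R alpha (wmin R alpha mu) = neg_roots mu" using w by simp_all
qed

end

locale minuscule_shift = root_system_with_base +
  fixes om lam nu :: 'a
  assumes omega_dom: "om \<in> dominant R alpha"
    and omega_min: "minuscule R alpha om \<or> quasi_minuscule R alpha om"
    and lambda_dom: "lam \<in> dominant R alpha"
    and nu_orbit: "nu \<in> (\<lambda>w. w om) ` W0 R"
begin

abbreviation "mu \<equiv> lam - nu"

lemma lam_weights: "lam \<in> weights R"
  using lambda_dom dominant_iff by blast

lemma nu_weights: "nu \<in> weights R"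
proof -
  obtain y where "y \<in> W0 R" "nu = y om" using nu_orbit by blast
  then show ?thesis using W0_weights omega_dom by (simp add: dominant_iff)
qed

lemma mu_weights: "mu \<in> weights R"
  using diff_weights lam_weights nu_weights by blast

lemma om_nonzero: "om \<noteq> 0"
  using omega_min alpha0_Rp Rp_root zero_notin_R
  by (auto simp: minuscule_def quasi_minuscule_def)

lemma nu_nonzero: "nu \<noteq> 0"
proof
  assume "nu = 0"
  obtain y where y: "y \<in> W0 R" "nu = y om" using nu_orbit by blast
  then have "y om = y 0" using \<open>nu = 0\<close> W0_zero[OF y(1)] by simp
  then show False using W0_inj[OF y(1)] om_nonzero by blast
qed

lemma nu_coroot_nu: "nu \<bullet> coroot nu = 2"
  using inner_coroot_self[OF nu_nonzero] .

lemma om_pairing_le1: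
  assumes c: "c \<in> Rp" "c \<noteq> om"
  shows "0 \<le> om \<bullet> coroot c \<and> om \<bullet> coroot c \<le> 1"
proof (cases "minuscule R alpha om")
  case True
  then show ?thesis using c by (auto simp: minuscule_def)
next
  case False
  then have "om = alpha0 R alpha" using omega_min by (simp add: quasi_minuscule_def)
  then show ?thesis using alpha0_pairing_le1[of c] omega_dom c by (simp add: dominant_iff)
qed

lemma orbit_nu_pairing_le1:
  assumes v: "v \<in> W0 R" and b: "b \<in> R" "b \<noteq> v nu" "b \<noteq> - v nu"
  shows "\<bar>v nu \<bullet> coroot b\<bar> \<le> 1"
proof -
  obtain y where y: "y \<in> W0 R" "nu = y om" using nu_orbit by blast
  show ?thesis
    using orbit_pairing_small[OF _ W0_comp[OF v y(1)] b(1)] om_pairing_le1 b y(2) by simp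
qed

lemma neg_roots_other:
  assumes b: "b \<in> neg_roots mu" "b \<noteq> nu"
  shows "lam \<bullet> coroot b = 0 \<and> nu \<bullet> coroot b = 1"
proof -
  have bRp: "b \<in> Rp" and neg: "mu \<bullet> coroot b < 0" using b(1) by (auto simp: neg_roots_def)
  have bR: "b \<in> R" using Rp_root[OF bRp] .
  have l0: "0 \<le> lam \<bullet> coroot b" using lambda_dom bRp by (simp add: dominant_iff)
  have lI: "lam \<bullet> coroot b \<in> \<int>" using weights_pairing_int[OF lam_weights bR] .
  have nI: "nu \<bullet> coroot b \<in> \<int>" using weights_pairing_int[OF nu_weights bR] .
  have ne: "mu \<bullet> coroot b = lam \<bullet> coroot b - nu \<bullet> coroot b" by (simp add: inner_diff_left)
  have "b \<noteq> - nu"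
  proof
    assume "b = - nu"
    then have "nu \<bullet> coroot b = -2" using nu_coroot_nu by (simp add: coroot_uminus)
    then show False using neg ne l0 by simp
  qed
  then have ab: "\<bar>nu \<bullet> coroot b\<bar> \<le> 1" using orbit_nu_pairing_le1[OF W0.W0_id bR] b(2) by simp
  have "0 < nu \<bullet> coroot b" using neg ne l0 by simp
  then have n1: "nu \<bullet> coroot b = 1" using Ints_pos_ge1[OF nI] ab by (simp add: abs_le_iff)
  then have "lam \<bullet> coroot b < 1" using neg ne by simp
  then have "lam \<bullet> coroot b = 0" using Ints_pos_ge1[OF lI] l0 by (cases "lam \<bullet> coroot b = 0") auto
  then show ?thesis using n1 by simp
qed

lemma theta_mu: "theta R alpha mu = (if nu \<in> neg_roots mu then 1 - lam \<bullet> coroot nu else 0)"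
proof -
  define f where "f b = - (mu \<bullet> coroot b) - 1" for b
  have f0: "f b = 0" if "b \<in> neg_roots mu - {nu}" for b
    using neg_roots_other[of b] that by (simp add: f_def inner_diff_left)
  have "theta R alpha mu = (\<Sum>b\<in>neg_roots mu. f b)"
    using theta_eq_sum wmin_characterization[OF mu_weights] unfolding f_def by (metis order_refl)
  also have "\<dots> = (if nu \<in> neg_roots mu then f nu else 0)"
  proof (cases "nu \<in> neg_roots mu")
    case True
    then show ?thesis using f0 sum.remove[OF finite_neg_roots[of mu] True, of f] by simp
  next
    case False
    then show ?thesis using f0 by (simp add: sum.neutral)
  qed
  also have "\<dots> = (if nu \<in> neg_roots mu then 1 - lam \<bullet> coroot nu else 0)"
    using nu_coroot_nu by (simp add: f_def inner_diff_left)
  finally show ?thesis .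
qed

lemma lam_coroot_nu_01:
  assumes "nu \<in> neg_roots mu"
  shows "lam \<bullet> coroot nu = 0 \<or> lam \<bullet> coroot nu = 1"
proof -
  have nRp: "nu \<in> Rp" and neg: "mu \<bullet> coroot nu < 0" using assms by (auto simp: neg_roots_def)
  obtain z where z: "lam \<bullet> coroot nu = of_int z"
    using weights_pairing_int[OF lam_weights Rp_root[OF nRp]] Ints_cases by blast
  have "0 \<le> lam \<bullet> coroot nu" using lambda_dom nRp by (simp add: dominant_iff)
  then have "0 \<le> z" using z by simp
  moreover have "z < 2" using z neg nu_coroot_nu by (simp add: inner_diff_left)
  ultimately show ?thesis using z by auto
qed

subsection \<open>The case \<open>(lam - nu)\<^sub>+ \<noteq> lam\<close>\<close>

lemma lam_coroot_nu_if_not_fixed: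
  assumes ne: "dom_rep R alpha mu \<noteq> lam" and nN: "nu \<in> neg_roots mu"
  shows "lam \<bullet> coroot nu = 0"
proof (rule ccontr)
  assume "lam \<bullet> coroot nu \<noteq> 0"
  then have "lam \<bullet> coroot nu = 1" using lam_coroot_nu_01[OF nN] by blast
  then have "mu \<bullet> coroot nu = -1" using nu_coroot_nu by (simp add: inner_diff_left)
  then have "rrefl nu mu = lam" by (simp add: rrefl_def)
  then have mu_eq: "mu = rrefl nu lam" using nu_nonzero by (metis rrefl_rrefl)
  let ?w = "wmin R alpha mu"
  have nR: "nu \<in> R" using nN Rp_root by (simp add: neg_roots_def)
  have wW: "?w \<circ> rrefl nu \<in> W0 R"
    using W0_comp[OF wmin_characterization(1)[OF mu_weights] rrefl_W0[OF nR]] .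
  have "(?w \<circ> rrefl nu) lam \<in> dominant R alpha"
    using mu_eq wmin_characterization(2)[OF mu_weights] by simp
  then have "(?w \<circ> rrefl nu) lam = lam" using W0_fixes_dominant[OF wW lambda_dom] by simp
  then show False using ne mu_eq by (simp add: dom_rep_def)
qed

lemma case_not_fixed:
  assumes "dom_rep R alpha mu \<noteq> lam"
  shows "wmin R alpha mu \<in> stab R lam"
    and "theta R alpha mu = (if nu \<in> inv_set R alpha (wmin R alpha mu) then 1 else 0)"
proof -
  note w = wmin_characterization[OF mu_weights]
  have "\<forall>b\<in>inv_set R alpha (wmin R alpha mu). lam \<bullet> coroot b = 0"
    using w(3) neg_roots_other lam_coroot_nu_if_not_fixed[OF assms] by blast
  then show "wmin R alpha mu \<in> stab R lam"
    using W0_fixes_dominant_if_inv_set_orth[OF w(1) lambda_dom] w(1) by (simp add: stab_def)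
  show "theta R alpha mu = (if nu \<in> inv_set R alpha (wmin R alpha mu) then 1 else 0)"
    using theta_mu w(3) lam_coroot_nu_if_not_fixed[OF assms] by simp
qed

subsection \<open>The case \<open>(lam - nu)\<^sub>+ = lam\<close>\<close>

definition reduction_set :: "'a set" where
  "reduction_set = {b \<in> Rp. lam \<bullet> coroot b = 0 \<and> nu \<bullet> coroot b = 1}"

context
  assumes fixed: "dom_rep R alpha mu = lam"
begin

lemma lam_coroot_nu_if_fixed: "lam \<bullet> coroot nu = 1"
proof -
  note w = wmin_characterization[OF mu_weights]
  have "mu \<bullet> mu = lam \<bullet> lam"
    using W0_inner[OF w(1), of mu mu] fixed by (simp add: dom_rep_def)
  then have "2 * (lam \<bullet> nu) = nu \<bullet> nu"
    by (simp add: inner_diff_left inner_diff_right inner_commute algebra_simps)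
  moreover have "0 < nu \<bullet> nu" using nu_nonzero by simp
  ultimately show ?thesis by (simp add: coroot_def)
qed

lemma nu_neg_roots_if_fixed: "nu \<in> neg_roots mu"
proof (rule ccontr)
  note w = wmin_characterization[OF mu_weights]
  assume "nu \<notin> neg_roots mu"
  then have "\<forall>b\<in>inv_set R alpha (wmin R alpha mu). lam \<bullet> coroot b = 0"
    using neg_roots_other w(3) by auto
  then have "wmin R alpha mu lam = wmin R alpha mu mu"
    using W0_fixes_dominant_if_inv_set_orth[OF w(1) lambda_dom] fixed by (simp add: dom_rep_def)
  then show False using W0_inj[OF w(1)] nu_nonzero by fastforce
qed

lemma nu_Rp_if_fixed: "nu \<in> Rp"
  using nu_neg_roots_if_fixed by (simp add: neg_roots_def)

text \<open>A minuscule orbit contains no root, so in this case \<open>om\<close> is quasi-minuscule.\<close>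

lemma om_alpha0_if_fixed: "om = alpha0 R alpha"
proof (cases "minuscule R alpha om")
  case True
  obtain y where y: "y \<in> W0 R" "nu = y om" using nu_orbit by blast
  have "\<forall>c\<in>Rp. 0 \<le> om \<bullet> coroot c \<and> om \<bullet> coroot c \<le> 1" using True by (auto simp: minuscule_def)
  then have "\<bar>y om \<bullet> coroot nu\<bar> \<le> 1"
    using orbit_pairing_small_all[OF _ y(1) Rp_root[OF nu_Rp_if_fixed]] by blast
  then show ?thesis using y(2) nu_coroot_nu by simp
next
  case False
  then show ?thesis using omega_min by (simp add: quasi_minuscule_def)
qed

lemma reduction_step:
  assumes u: "u \<in> W0 R" "u lam = lam" "u nu \<in> Rp" "inv_set R alpha u \<subseteq> reduction_set"
    and not_simple: "\<forall>j\<in>{Suc 0..DIM('a)}. u nu \<noteq> alpha j"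
  obtains k where "k \<in> {Suc 0..DIM('a)}" "(rrefl (alpha k) \<circ> u) lam = lam"
    "(rrefl (alpha k) \<circ> u) nu \<in> Rp" "height ((rrefl (alpha k) \<circ> u) nu) = height (u nu) - 1"
    "inv_set R alpha (rrefl (alpha k) \<circ> u) \<subseteq> reduction_set"
proof -
  let ?y = "u nu"
  have ybound: "?y \<bullet> coroot (alpha j) \<le> 1" if j: "j \<in> {Suc 0..DIM('a)}" for j
  proof -
    have "alpha j \<noteq> ?y" using not_simple j by metis
    moreover have "alpha j \<noteq> - ?y" using simple_Rp[OF j] uminus_Rp_Rm[OF u(3)] Rp_not_Rm by metis
    ultimately show ?thesis using orbit_nu_pairing_le1[OF u(1) simple_root[OF j]] by simp
  qed
  have "lam \<bullet> coroot ?y = 1" using W0_inner_coroot[OF u(1), of lam nu] u(2) lam_coroot_nu_if_fixed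
    by simp
  then obtain k where k: "k \<in> {Suc 0..DIM('a)}" "0 < ?y \<bullet> coroot (alpha k)" "lam \<bullet> coroot (alpha k) = 0"
    using ex_simple_acute_orthogonal[OF u(3) lambda_dom _ ybound] by blast
  have yk: "?y \<bullet> coroot (alpha k) = 1"
    using Ints_pos_ge1[OF root_pairing_int[OF simple_root[OF k(1)] Rp_root[OF u(3)]] k(2)] ybound[OF k(1)]
    by simp
  let ?s = "rrefl (alpha k)"
  have "inv_set R alpha (?s \<circ> u) \<subseteq> reduction_set"
  proof
    fix a assume a: "a \<in> inv_set R alpha (?s \<circ> u)"
    then have aRp: "a \<in> Rp" and m: "?s (u a) \<in> Rm" by (auto simp: inv_set_def)
    show "a \<in> reduction_set"
    proof (cases "u a \<in> Rm")
      case True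
      then show ?thesis using aRp u(4) by (auto simp: inv_set_def)
    next
      case False
      then have "u a \<in> Rp" using W0_root[OF u(1) Rp_root[OF aRp]] R_Rp_Rm by blast
      then have ua: "u a = alpha k" using rrefl_simple_Rm_eq[OF k(1) _ m] by blast
      have "lam \<bullet> coroot a = 0" using W0_inner_coroot[OF u(1), of lam a] u(2) ua k(3) by simp
      moreover have "nu \<bullet> coroot a = 1" using W0_inner_coroot[OF u(1), of nu a] ua yk by simp
      ultimately show ?thesis using aRp by (simp add: reduction_set_def)
    qed
  qed
  moreover have "height ((?s \<circ> u) nu) = height ?y - 1"
    using yk by (simp add: height_def rrefl_def inner_diff_left inner_simple_rho_vee[OF k(1)])
  moreover have "(?s \<circ> u) nu \<in> Rp" using rrefl_simple_Rp[OF k(1) u(3)] not_simple k(1) by simp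
  moreover have "(?s \<circ> u) lam = lam" using u(2) k(3) by (simp add: rrefl_def)
  ultimately show ?thesis using that k(1) by blast
qed

lemma ex_W0_to_simple:
  assumes "u \<in> W0 R" "u lam = lam" "u nu \<in> Rp" "inv_set R alpha u \<subseteq> reduction_set"
  shows "\<exists>u'\<in>W0 R. \<exists>j\<in>{Suc 0..DIM('a)}. u' lam = lam \<and> u' nu = alpha j \<and>
    inv_set R alpha u' \<subseteq> reduction_set"
proof -
  obtain n :: nat where "height (u nu) = real n" using height_Rp_nat[OF assms(3)] by blast
  then show ?thesis
    using assms
  proof (induction n arbitrary: u rule: less_induct)
    case (less n)
    show ?case
    proof (cases "\<exists>j\<in>{Suc 0..DIM('a)}. u nu = alpha j")
      case True
      then show ?thesis using less.prems by blast
    next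
      case False
      then obtain k where k: "k \<in> {Suc 0..DIM('a)}" "(rrefl (alpha k) \<circ> u) lam = lam"
        "(rrefl (alpha k) \<circ> u) nu \<in> Rp" "height ((rrefl (alpha k) \<circ> u) nu) = height (u nu) - 1"
        "inv_set R alpha (rrefl (alpha k) \<circ> u) \<subseteq> reduction_set"
        using reduction_step[OF less.prems(2-5)] by blast
      have "n \<ge> 1" using height_Rp_ge1[OF less.prems(4)] less.prems(1) by simp
      then have "height ((rrefl (alpha k) \<circ> u) nu) = real (n - 1)" using k(4) less.prems(1) by simp
      moreover have "n - 1 < n" using \<open>n \<ge> 1\<close> by simp
      ultimately show ?thesis
        using less.IH W0_comp[OF rrefl_simple_W0[OF k(1)] less.prems(2)] k(2,3,5) by blast
    qed
  qed
qed

lemma ex_reduction_to_simple: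
  obtains u j where "u \<in> W0 R" "j \<in> {Suc 0..DIM('a)}" "u lam = lam" "u nu = alpha j"
    "inv_set R alpha u \<subseteq> reduction_set"
  using ex_W0_to_simple[OF W0.W0_id] nu_Rp_if_fixed inv_set_id by auto

context
  fixes u j
  assumes u: "u \<in> W0 R" "j \<in> {Suc 0..DIM('a)}" "u lam = lam" "u nu = alpha j"
    "inv_set R alpha u \<subseteq> reduction_set"
begin

lemma lam_coroot_simple: "lam \<bullet> coroot (alpha j) = 1"
  using W0_inner_coroot[OF u(1), of lam nu] u(3,4) lam_coroot_nu_if_fixed by simp

lemma rrefl_simple_comp_mu: "(rrefl (alpha j) \<circ> u) mu = lam"
proof -
  have "u mu = lam - alpha j" using u(3,4) W0_diff[OF u(1)] by simp
  then have "(rrefl (alpha j) \<circ> u) mu = rrefl (alpha j) lam - rrefl (alpha j) (alpha j)"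
    by (simp add: linear_diff[OF linear_rrefl])
  then show ?thesis
    using lam_coroot_simple rrefl_self[OF simple_nonzero[OF u(2)]] by (simp add: rrefl_def)
qed

lemma inv_set_rrefl_simple_comp: "inv_set R alpha (rrefl (alpha j) \<circ> u) = inv_set R alpha u \<union> {nu}"
proof
  let ?sj = "rrefl (alpha j)"
  show "inv_set R alpha (?sj \<circ> u) \<subseteq> inv_set R alpha u \<union> {nu}"
  proof
    fix a assume a: "a \<in> inv_set R alpha (?sj \<circ> u)"
    then have aRp: "a \<in> Rp" and m: "?sj (u a) \<in> Rm" by (auto simp: inv_set_def)
    show "a \<in> inv_set R alpha u \<union> {nu}"
    proof (cases "u a \<in> Rm")
      case True
      then show ?thesis using aRp by (simp add: inv_set_def)
    next
      case False
      then have "u a \<in> Rp" using W0_root[OF u(1) Rp_root[OF aRp]] R_Rp_Rm by blast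
      then have "u a = u nu" using rrefl_simple_Rm_eq[OF u(2) _ m] u(4) by simp
      then show ?thesis using W0_inj[OF u(1)] by blast
    qed
  qed
  show "inv_set R alpha u \<union> {nu} \<subseteq> inv_set R alpha (?sj \<circ> u)"
  proof
    fix a assume a: "a \<in> inv_set R alpha u \<union> {nu}"
    show "a \<in> inv_set R alpha (?sj \<circ> u)"
    proof (cases "a = nu")
      case True
      then show ?thesis
        using nu_Rp_if_fixed u(4) simple_Rp[OF u(2)] uminus_Rp_Rm rrefl_self[OF simple_nonzero[OF u(2)]]
        by (simp add: inv_set_def)
    next
      case False
      then have aRp: "a \<in> Rp" and um: "u a \<in> Rm" using a by (auto simp: inv_set_def)
      have "- u a \<noteq> alpha j"
      proof
        assume "- u a = alpha j"
        then have "- a = nu" using W0_uminus[OF u(1)] u(4) W0_inj[OF u(1)] by metis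
        then show False using aRp nu_Rp_if_fixed uminus_Rp_Rm Rp_not_Rm by (metis minus_minus)
      qed
      then have "?sj (- u a) \<in> Rp" using rrefl_simple_Rp[OF u(2)] um Rm_iff_uminus_Rp by blast
      then have "?sj (u a) \<in> Rm" using linear_neg[OF linear_rrefl] Rm_iff_uminus_Rp
        by (metis minus_minus)
      then show ?thesis using aRp by (simp add: inv_set_def)
    qed
  qed
qed

lemma wmin_mu_if_fixed: "wmin R alpha mu = rrefl (alpha j) \<circ> u"
proof -
  have "inv_set R alpha (rrefl (alpha j) \<circ> u) \<subseteq> neg_roots mu"
    using inv_set_rrefl_simple_comp u(5) nu_neg_roots_if_fixed
    by (auto simp: reduction_set_def neg_roots_def inner_diff_left)
  then show ?thesis
    using wmin_eq W0_comp[OF rrefl_simple_W0[OF u(2)] u(1)] rrefl_simple_comp_mu lambda_dom by metis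
qed

lemma theta_mu_if_fixed: "theta R alpha mu = 0"
  using theta_mu nu_neg_roots_if_fixed lam_coroot_nu_if_fixed by simp

text \<open>With \<open>z = u \<circ> y\<close> (where \<open>nu = y om\<close>) the simple root \<open>alpha j\<close> is in the orbit of \<open>alpha0\<close>,
  and \<open>m = y\<^sup>-\<^sup>1 lam\<close> pairs to 1 with its coroot.\<close>

lemma q_simple_eq_q_s0_if_fixed:
  assumes "length_multiplicative R alpha q"
  shows "q (rrefl (alpha j)) = q (s0 R alpha)"
proof -
  obtain y where y: "y \<in> W0 R" "nu = y om" using nu_orbit by blast
  have "(u \<circ> y) (alpha0 R alpha) = alpha j" using u(4) y(2) om_alpha0_if_fixed by simp
  moreover have "inv y lam \<bullet> coroot (alpha0 R alpha) = 1"
    using W0_inner_coroot[OF y(1), of "inv y lam" "alpha0 R alpha"] y om_alpha0_if_fixed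
      lam_coroot_nu_if_fixed by simp
  ultimately show ?thesis
    using q_simple_eq_q_s0[OF assms _ W0_comp[OF u(1) y(1)] u(2)] omega_dom om_alpha0_if_fixed
      W0_weights[OF W0_inv[OF y(1)] lam_weights] by blast
qed

end

end

end

theorem mainTheorem18:
  fixes R :: "'a::euclidean_space set" and alpha :: "nat \<Rightarrow> 'a"
    and q :: "('a \<Rightarrow> 'a) \<Rightarrow> real" and om lam nu :: 'a
  assumes root_system: "irreducible_reduced_crystallographic_root_system R"
    and base: "is_base R alpha"
    and q_mult: "length_multiplicative R alpha q"
    and omega_dom: "om \<in> dominant R alpha"
    and omega_min: "minuscule R alpha om \<or> quasi_minuscule R alpha om"
    and lambda_dom: "lam \<in> dominant R alpha"
    and nu_orbit: "nu \<in> (\<lambda>w. w om) ` W0 R"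
  shows "(dom_rep R alpha (lam - nu) \<noteq> lam \<longrightarrow>
            wmin R alpha (lam - nu) \<in> stab R lam \<and>
            (nu \<in> inv_set R alpha (wmin R alpha (lam - nu)) \<longrightarrow> theta R alpha (lam - nu) = 1) \<and>
            (nu \<notin> inv_set R alpha (wmin R alpha (lam - nu)) \<longrightarrow> theta R alpha (lam - nu) = 0))
       \<and> (dom_rep R alpha (lam - nu) = lam \<longrightarrow>
            (\<exists>j\<in>{1..DIM('a)}. wmin R alpha (lam - nu) nu = - alpha j \<and>
               rrefl (alpha j) \<circ> wmin R alpha (lam - nu) \<in> stab R lam \<and>
               theta R alpha (lam - nu) = 0 \<and>
               inv_set R alpha (wmin R alpha (lam - nu)) =
                 inv_set R alpha (rrefl (alpha j) \<circ> wmin R alpha (lam - nu)) \<union> {nu} \<and>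
               q (rrefl (alpha j)) = q (s0 R alpha)))"
proof -
  interpret minuscule_shift R alpha om lam nu
    using root_system base omega_dom omega_min lambda_dom nu_orbit by unfold_locales
  have "dom_rep R alpha (lam - nu) = lam \<Longrightarrow> ?thesis"
  proof -
    assume fixed: "dom_rep R alpha (lam - nu) = lam"
    obtain u j where u: "u \<in> W0 R" "j \<in> {Suc 0..DIM('a)}" "u lam = lam" "u nu = alpha j"
      "inv_set R alpha u \<subseteq> reduction_set"
      using ex_reduction_to_simple[OF fixed] .
    have sj_w: "rrefl (alpha j) \<circ> wmin R alpha (lam - nu) = u"
      using wmin_mu_if_fixed[OF fixed u] simple_nonzero[OF u(2)]
        by (simp add: fun_eq_iff rrefl_rrefl)
    have "wmin R alpha (lam - nu) nu = - alpha j \<and>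
        rrefl (alpha j) \<circ> wmin R alpha (lam - nu) \<in> stab R lam \<and>
        theta R alpha (lam - nu) = 0 \<and>
        inv_set R alpha (wmin R alpha (lam - nu)) =
          inv_set R alpha (rrefl (alpha j) \<circ> wmin R alpha (lam - nu)) \<union> {nu} \<and>
        q (rrefl (alpha j)) = q (s0 R alpha)"
      using u sj_w wmin_mu_if_fixed[OF fixed u] theta_mu_if_fixed[OF fixed u]
        inv_set_rrefl_simple_comp[OF fixed u] q_simple_eq_q_s0_if_fixed[OF fixed u q_mult]
        rrefl_self[OF simple_nonzero[OF u(2)]]
      by (simp add: stab_def)
    then show ?thesis using fixed u(2) by auto
  qed
  then show ?thesis using case_not_fixed by auto
qed

end
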